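(* Each of the following statements implies the next: (a) There exist $0<\alpha<1/2$ and $0<\beta<2$ such that $\operatorname{PaleyDiscrepancy}[\alpha,\beta]$ holds, i.e., for every sufficiently large prime $p\equiv 1 \bmod 4$, \[ \bigg|\sum_{a,b\in S}\chi(a-b)\bigg|<|S|^{2-\beta}\qquad\text{for all } S\subseteq\mathbb{F}_p \text{ with } |S|>p^\alpha . \] (b) There exist $\gamma>1/2$ and $\tau<1/2$ such that for every $\epsilon>0$, $\operatorname{PaleyRIP}[\gamma,\tau-1/2+\epsilon]$ holds, i.e., for every sufficiently large prime $p\equiv 1\bmod 4$, the $\frac{p+1}{2}\times(p+1)$ Paley matrix $\Phi_p$ satisfies the $(p^\gamma,p^{\tau-1/2+\epsilon})$-restricted isometry property. (c) There exists $\tau<1/2$ such that for every $\epsilon>0$, $\operatorname{PaleyClique}[\tau+\epsilon]$ holds, i.e., for every sufficiently large prime $p\equiv 1\bmod 4$, the largest clique in the Paley graph on $p$ vertices has at most $p^{\tau+\epsilon}$ vertices.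
   Context: Throughout, $p\equiv 1 \bmod 4$ is prime, $\mathbb{F}_p$ is the field with $p$ elements, and $\chi:\mathbb{F}_p\to\{-1,0,1\}$ is the Legendre symbol: $\chi(0)=0$, $\chi(x)=1$ if $x$ is a nonzero square, $\chi(x)=-1$ otherwise. The Paley graph on $p$ vertices has vertex set $\mathbb{F}_p$, with $x\sim y$ iff $\chi(x-y)=1$. Write $e(a)=e^{2\pi i a/p}$. Paley matrix: let $Q=\{x\in\mathbb{F}_p:\chi(x)\ge 0\}$ (the squares including $0$), so $M:=|Q|=(p+1)/2$. Let $H$ be the $M\times p$ matrix with rows indexed by $x\in Q$ (with $x=0$ as the first row) and columns indexed by $j\in\{0,1,\dots,p-1\}$, with entries $H[x,j]=e(-xj)$ (equivalently $H[i,j]=e(-i^2 j)$ for $i=0,1,\dots,(p-1)/2$). Let $\tilde\Phi$ be obtained from $H$ by scaling the first row by $\sqrt{1/p}$ and every other row by $\sqrt{2/p}$. The Paley matrix $\Phi_p$ is the $M\times (p+1)$ matrix obtained by appending to $\tilde\Phi$ the column $(1,0,\dots,0)^\top$ (the first standard basis vector of $\mathbb{C}^M$). An $M\times N$ matrix $\Phi$ satisfies the $(K,\delta)$-restricted isometry property (with $0\le\delta<1$) if $(1-\delta)\|x\|^2\le\|\Phi x\|^2\le(1+\delta)\|x\|^2$ for every $x\in\mathbb{R}^N$ having at most $K$ nonzero entries, where $\|\cdot\|$ is the Euclidean norm. *)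

theory Defs
  imports "HOL-Analysis.Analysis" "HOL-Number_Theory.Number_Theory"
begin

text \<open>Elements of F_p are represented by the integers 0..p-1; chi is the Legendre symbol.\<close>

definition chi :: "nat \<Rightarrow> int \<Rightarrow> int" where
  "chi p x = Legendre x (int p)"

definition ep :: "nat \<Rightarrow> real \<Rightarrow> complex" where
  "ep p a = exp (2 * pi * \<i> * complex_of_real a / of_nat p)"

text \<open>Paley matrix: rows i = 0..(p-1)/2, columns j = 0..p (column p is e_1).
  Entry for j < p: scale_i * e(-i^2 j), scale_0 = sqrt(1/p), scale_i = sqrt(2/p) otherwise.\<close>
definition paley_matrix :: "nat \<Rightarrow> nat \<Rightarrow> nat \<Rightarrow> complex" where
  "paley_matrix p i j =
     (if j = p then (if i = 0 then 1 else 0)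
      else complex_of_real (if i = 0 then sqrt (1 / real p) else sqrt (2 / real p))
           * ep p (- (real i ^ 2 * real j)))"

definition RIP :: "(nat \<Rightarrow> nat \<Rightarrow> complex) \<Rightarrow> nat \<Rightarrow> nat \<Rightarrow> real \<Rightarrow> real \<Rightarrow> bool" where
  "RIP Phi M N K \<delta> \<longleftrightarrow>
     (\<forall>x :: nat \<Rightarrow> real. real (card {j \<in> {0..<N}. x j \<noteq> 0}) \<le> K \<longrightarrow>
        (1 - \<delta>) * (\<Sum>j<N. (x j)\<^sup>2)
          \<le> (\<Sum>i<M. (cmod (\<Sum>j<N. Phi i j * complex_of_real (x j)))\<^sup>2) \<and>
        (\<Sum>i<M. (cmod (\<Sum>j<N. Phi i j * complex_of_real (x j)))\<^sup>2)
          \<le> (1 + \<delta>) * (\<Sum>j<N. (x j)\<^sup>2))"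

definition PaleyDiscrepancy :: "real \<Rightarrow> real \<Rightarrow> bool" where
  "PaleyDiscrepancy \<alpha> \<beta> \<longleftrightarrow>
     (\<exists>P. \<forall>p::nat. prime p \<and> p mod 4 = 1 \<and> p \<ge> P \<longrightarrow>
        (\<forall>S. S \<subseteq> {0..<int p} \<and> real (card S) > real p powr \<alpha> \<longrightarrow>
           \<bar>real_of_int (\<Sum>a\<in>S. \<Sum>b\<in>S. chi p (a - b))\<bar> < real (card S) powr (2 - \<beta>)))"

definition PaleyRIP :: "real \<Rightarrow> real \<Rightarrow> bool" where
  "PaleyRIP \<gamma> d \<longleftrightarrow>
     (\<exists>P. \<forall>p::nat. prime p \<and> p mod 4 = 1 \<and> p \<ge> P \<longrightarrow>
        RIP (paley_matrix p) ((p + 1) div 2) (p + 1) (real p powr \<gamma>) (real p powr d))"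

definition paley_clique :: "nat \<Rightarrow> int set \<Rightarrow> bool" where
  "paley_clique p S \<longleftrightarrow> S \<subseteq> {0..<int p} \<and>
     (\<forall>a\<in>S. \<forall>b\<in>S. a \<noteq> b \<longrightarrow> chi p (a - b) = 1)"

definition PaleyClique :: "real \<Rightarrow> bool" where
  "PaleyClique t \<longleftrightarrow>
     (\<exists>P. \<forall>p::nat. prime p \<and> p mod 4 = 1 \<and> p \<ge> P \<longrightarrow>
        (\<forall>S. paley_clique p S \<longrightarrow> real (card S) \<le> real p powr t))"

end

theory Submission
  imports Defs "HOL-Real_Asymp.Real_Asymp"
begin

(* The Paley matrix has Gram matrix I + (g/p) X up to a rank-one border coming from the extra
   column e_1, where X j k = chi (j - k) and g is the quadratic Gauss sum, |g| = sqrt p.  Hence the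
   RIP constant on K-sparse vectors is governed by max |x^T X x| / sqrt p over K-sparse unit x.

   (a) => (b): polarisation over disjoint pieces upgrades the discrepancy bound for single sets to
   a bound rho sqrt (|A| |B|) on the sums of chi (a - b) over pairs of sets of size at most K, and a
   summation by parts along the level sets of |x| turns this into |x^T X x| <= 2 rho H_K |x|^2,
   where the harmonic number H_K is O(log p).

   (b) => (c): for the indicator vector x of a clique of size m, x^T X x = m (m - 1), so the RIP
   bound forces m - 1 <= delta sqrt p. *)

section \<open>Additive characters modulo p\<close>

definition ep_int :: "nat \<Rightarrow> int \<Rightarrow> complex" where
  "ep_int p n = ep p (of_int n)"

lemma ep_int_add: "ep_int p (a + b) = ep_int p a * ep_int p b"
  unfolding ep_int_def ep_def by (simp add: add_divide_distrib distrib_left exp_add)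

lemma ep_int_0 [simp]: "ep_int p 0 = 1"
  unfolding ep_int_def ep_def by simp

lemma ep_int_mult_modulus: "p > 0 \<Longrightarrow> ep_int p (int p * k) = 1"
proof -
  assume "p > 0"
  then have "2 * pi * \<i> * complex_of_real (real_of_int (int p * k)) / of_nat p
        = \<i> * (of_int k * (of_real pi * 2))"
    by (simp add: field_simps)
  then show ?thesis unfolding ep_int_def ep_def by simp
qed

lemma ep_int_cong: "p > 0 \<Longrightarrow> [a = b] (mod int p) \<Longrightarrow> ep_int p a = ep_int p b"
  by (metis cong_iff_lin cong_sym ep_int_add ep_int_mult_modulus mult_1_right)

lemma cnj_ep_int: "cnj (ep_int p n) = ep_int p (- n)"
  unfolding ep_int_def ep_def by (simp add: exp_cnj)

lemma ep_int_mult_cnj: "ep_int p a * cnj (ep_int p b) = ep_int p (a - b)"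
  using ep_int_add[of p a "- b"] by (simp add: cnj_ep_int)

lemma ep_int_power: "ep_int p c ^ n = ep_int p (c * int n)"
  by (induction n) (simp_all add: ep_int_add[symmetric] algebra_simps)

lemma ep_int_eq_1_imp_dvd:
  assumes "p > 0" "ep_int p c = 1"
  shows "int p dvd c"
proof -
  obtain n :: int
    where "Im (2 * pi * \<i> * complex_of_real (real_of_int c) / of_nat p) = of_int (2 * n) * pi"
    using assms(2) unfolding ep_int_def ep_def exp_eq_1 by blast
  then have "real_of_int c = real p * real_of_int n"
    using assms(1) by (simp add: field_simps)
  then have "c = int p * n"
    by (metis of_int_eq_iff of_int_mult of_int_of_nat_eq)
  then show ?thesis by simp
qed

lemma sum_atLeastLessThan_int_eq: "(\<Sum>y\<in>{0..<int p}. f y) = (\<Sum>y<p. f (int y))"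
proof -
  have "{0..<int p} = int ` {..<p}"
    using image_int_atLeastLessThan[of 0 p] by (simp add: lessThan_atLeast0)
  then show ?thesis by (simp add: sum.reindex)
qed

lemma sum_ep_int_mult:
  assumes "p > 0"
  shows "(\<Sum>y\<in>{0..<int p}. ep_int p (c * y)) = (if int p dvd c then of_nat p else 0)"
proof (cases "int p dvd c")
  case True
  then obtain k where "c = int p * k" by blast
  then have "ep_int p (c * y) = 1" for y
    using ep_int_mult_modulus[OF assms, of "k * y"] by (simp add: mult.assoc)
  then show ?thesis using True by simp
next
  case False
  then have "ep_int p c \<noteq> 1" using ep_int_eq_1_imp_dvd[OF assms] by blast
  moreover have "ep_int p c ^ p = 1"
    unfolding ep_int_power using ep_int_mult_modulus[OF assms, of c] by (simp add: mult.commute)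
  ultimately have "(\<Sum>y<p. ep_int p c ^ y) = 0" by (simp add: sum_gp_strict)
  then show ?thesis
    using False by (simp add: sum_atLeastLessThan_int_eq ep_int_power)
qed

lemma dvd_diff_imp_eq_int:
  fixes x y :: int
  assumes "x \<in> {0..<m}" "y \<in> {0..<m}" "m dvd x - y"
  shows "x = y"
  using assms cong_less_imp_eq_int[of x m y] by (simp add: cong_iff_dvd_diff)

section \<open>The Legendre symbol\<close>

lemma Legendre_cong:
  assumes "[a = b] (mod m)"
  shows "Legendre a m = Legendre b m"
proof -
  have "[a = 0] (mod m) \<longleftrightarrow> [b = 0] (mod m)" "QuadRes m a \<longleftrightarrow> QuadRes m b"
    using assms unfolding QuadRes_def by (meson cong_sym cong_trans)+
  then show ?thesis unfolding Legendre_def by simp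
qed

lemma Legendre_mod: "Legendre (a mod m) m = Legendre a m"
  by (rule Legendre_cong) (simp add: cong_def)

lemma Legendre_values: "Legendre a m \<in> {-1, 0, 1}"
  unfolding Legendre_def by auto

lemma Legendre_zero [simp]: "Legendre 0 m = 0"
  unfolding Legendre_def by simp

lemma Legendre_nondvd: "\<not> int p dvd a \<Longrightarrow> Legendre a (int p) \<in> {-1, 1}"
  unfolding Legendre_def cong_0_iff by auto

lemma Legendre_square: "\<not> int p dvd a \<Longrightarrow> Legendre a (int p) * Legendre a (int p) = 1"
  using Legendre_nondvd by fastforce

lemma Legendre_in_range:
  "0 < y \<Longrightarrow> y < int p \<Longrightarrow> Legendre y (int p) = (if QuadRes (int p) y then 1 else -1)"
  unfolding Legendre_def by (auto simp: cong_def)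

lemma cong_imp_eq_if_signs:
  fixes x y m :: int
  assumes "[x = y] (mod m)" "x \<in> {-1, 0, 1}" "y \<in> {-1, 0, 1}" "2 < m"
  shows "x = y"
proof (rule ccontr)
  assume "x \<noteq> y"
  then have "\<bar>m\<bar> \<le> \<bar>x - y\<bar>"
    using assms(1) by (intro dvd_imp_le_int) (auto simp: cong_iff_dvd_diff)
  then show False using assms(2-4) by auto
qed

lemma Legendre_mult:
  assumes "prime p" "2 < p"
  shows "Legendre (a * b) (int p) = Legendre a (int p) * Legendre b (int p)"
proof (rule cong_imp_eq_if_signs)
  let ?k = "(p - 1) div 2"
  have "[Legendre (a * b) (int p) = a ^ ?k * b ^ ?k] (mod int p)"
    using euler_criterion[OF assms, of "a * b"] by (simp add: power_mult_distrib)
  moreover have "[Legendre a (int p) * Legendre b (int p) = a ^ ?k * b ^ ?k] (mod int p)"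
    using euler_criterion[OF assms, of a] euler_criterion[OF assms, of b] by (rule cong_mult)
  ultimately show "[Legendre (a * b) (int p) = Legendre a (int p) * Legendre b (int p)] (mod int p)"
    using cong_sym cong_trans by blast
  show "Legendre a (int p) * Legendre b (int p) \<in> {-1, 0, 1}"
    using Legendre_values[of a "int p"] Legendre_values[of b "int p"] by auto
qed (use Legendre_values assms(2) in auto)

lemma prime_mod_4_eq_1_gt_2: "prime (p :: nat) \<Longrightarrow> p mod 4 = 1 \<Longrightarrow> 2 < p"
  using prime_ge_2_nat[of p] by (cases "p = 2") auto

lemma Legendre_minus_one:
  assumes "prime p" "p mod 4 = 1"
  shows "Legendre (-1) (int p) = 1"
proof (rule cong_imp_eq_if_signs)
  have p2: "2 < p" using prime_mod_4_eq_1_gt_2[OF assms] .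
  have "even ((p - 1) div 2)" using assms(2) by presburger
  then show "[Legendre (-1) (int p) = 1] (mod int p)"
    using euler_criterion[OF assms(1) p2, of "-1"] by simp
  show "2 < int p" using p2 by simp
qed (use Legendre_values in auto)

lemma chi_uminus:
  assumes "prime p" "p mod 4 = 1"
  shows "chi p (- d) = chi p d"
  using Legendre_mult[OF assms(1) prime_mod_4_eq_1_gt_2[OF assms], of "-1" d]
    Legendre_minus_one[OF assms] unfolding chi_def by simp

lemma abs_chi_le_1: "\<bar>chi p d\<bar> \<le> 1"
  unfolding chi_def using Legendre_values[of d "int p"] by auto

lemma chi_zero [simp]: "chi p 0 = 0"
  unfolding chi_def by simp

lemma bij_betw_mult_mod:
  assumes "prime p" "\<not> int p dvd d"
  shows "bij_betw (\<lambda>y. (d * y) mod int p) {0..<int p} {0..<int p}"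
proof -
  have inj: "inj_on (\<lambda>y. (d * y) mod int p) {0..<int p}"
  proof (rule inj_onI)
    fix x y assume "x \<in> {0..<int p}" "y \<in> {0..<int p}" "(d * x) mod int p = (d * y) mod int p"
    moreover from this have "int p dvd d * (x - y)"
      by (simp add: mod_eq_dvd_iff right_diff_distrib)
    then have "int p dvd x - y"
      using assms by (simp add: prime_dvd_mult_iff)
    ultimately show "x = y" by (meson dvd_diff_imp_eq_int)
  qed
  moreover have "(\<lambda>y. (d * y) mod int p) ` {0..<int p} \<subseteq> {0..<int p}"
    using prime_gt_0_nat[OF assms(1)] by auto
  ultimately show ?thesis
    by (simp add: bij_betw_def endo_inj_surj)
qed

definition nonzero_squares :: "nat \<Rightarrow> int set" where
  "nonzero_squares p = {y \<in> {1..<int p}. QuadRes (int p) y}"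

lemma inj_on_square_mod:
  assumes "prime p"
  shows "inj_on (\<lambda>i::nat. (int i)\<^sup>2 mod int p) {1..<(p + 1) div 2}"
proof (rule inj_onI)
  fix x y :: nat
  assume x: "x \<in> {1..<(p + 1) div 2}" and y: "y \<in> {1..<(p + 1) div 2}"
    and "(int x)\<^sup>2 mod int p = (int y)\<^sup>2 mod int p"
  then have "int p dvd (int x - int y) * (int x + int y)"
    by (simp add: mod_eq_dvd_iff power2_eq_square algebra_simps)
  moreover have "\<not> int p dvd int x + int y"
    using x y by (intro zdvd_not_zless) auto
  ultimately have "int p dvd int x - int y"
    using assms by (auto simp: prime_dvd_mult_iff)
  then show "x = y"
    using dvd_diff_imp_eq_int[of "int x" "int p" "int y"] x y by auto
qed

text \<open>Every nonzero square is the square of some \<open>r \<in> {1..<p}\<close>; if \<open>r > p/2\<close>, then \<open>p - r\<close>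
  has the same square and lies in \<open>{1..<(p + 1) div 2}\<close>.\<close>

lemma nonzero_squares_subset_image:
  assumes "prime p" "2 < p"
  shows "nonzero_squares p \<subseteq> (\<lambda>i::nat. (int i)\<^sup>2 mod int p) ` {1..<(p + 1) div 2}"
proof
  fix y assume y: "y \<in> nonzero_squares p"
  then obtain s where "[s\<^sup>2 = y] (mod int p)"
    unfolding nonzero_squares_def QuadRes_def by blast
  moreover define r where "r = s mod int p"
  then have "[r\<^sup>2 = s\<^sup>2] (mod int p)"
    by (intro cong_pow) (simp add: cong_def)
  ultimately have rs: "[r\<^sup>2 = y] (mod int p)"
    using cong_trans by blast
  have ymod: "y mod int p = y" using y unfolding nonzero_squares_def by auto
  have r: "0 \<le> r" "r < int p" using assms(2) by (auto simp: r_def)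
  have "r \<noteq> 0"
    using rs y unfolding nonzero_squares_def by (auto simp: cong_def)
  have "odd p" using assms prime_odd_nat by auto
  then have half: "2 * int ((p + 1) div 2) = int p + 1"
    by (auto elim!: oddE)
  have witness: "y \<in> (\<lambda>i::nat. (int i)\<^sup>2 mod int p) ` {1..<(p + 1) div 2}"
    if "1 \<le> t" "2 * t < int p + 1" "[t\<^sup>2 = r\<^sup>2] (mod int p)" for t
  proof (rule image_eqI)
    show "nat t \<in> {1..<(p + 1) div 2}" using that(1,2) half by auto
    have "[t\<^sup>2 = y] (mod int p)"
      using that(3) rs by (rule cong_trans)
    then show "y = (int (nat t))\<^sup>2 mod int p"
      using that(1) ymod by (simp add: cong_def)
  qed
  show "y \<in> (\<lambda>i::nat. (int i)\<^sup>2 mod int p) ` {1..<(p + 1) div 2}"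
  proof (cases "2 * r < int p + 1")
    case True
    then show ?thesis using witness[of r] \<open>r \<noteq> 0\<close> r by simp
  next
    case False
    have "(int p - r)\<^sup>2 - r\<^sup>2 = int p * (int p - 2 * r)"
      by (simp add: power2_eq_square algebra_simps)
    then have "[(int p - r)\<^sup>2 = r\<^sup>2] (mod int p)"
      unfolding cong_iff_dvd_diff by simp
    then show ?thesis using witness[of "int p - r"] False r by simp
  qed
qed

lemma bij_betw_square_mod:
  assumes "prime p" "2 < p"
  shows "bij_betw (\<lambda>i::nat. (int i)\<^sup>2 mod int p) {1..<(p + 1) div 2} (nonzero_squares p)"
proof -
  have "(\<lambda>i::nat. (int i)\<^sup>2 mod int p) ` {1..<(p + 1) div 2} \<subseteq> nonzero_squares p"
  proof clarify
    fix i :: nat assume i: "i \<in> {1..<(p + 1) div 2}"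
    then have "\<not> int p dvd int i"
      using zdvd_imp_le[of "int p" "int i"] by auto
    then have "(int i)\<^sup>2 mod int p \<noteq> 0"
      using assms by (simp add: prime_dvd_power_iff flip: dvd_eq_mod_eq_0)
    moreover have "0 \<le> (int i)\<^sup>2 mod int p" "(int i)\<^sup>2 mod int p < int p"
      using assms(2) by auto
    ultimately show "(int i)\<^sup>2 mod int p \<in> nonzero_squares p"
      unfolding nonzero_squares_def QuadRes_def by (auto simp: cong_def)
  qed
  then show ?thesis
    using inj_on_square_mod[OF assms(1)] nonzero_squares_subset_image[OF assms]
    by (auto simp: bij_betw_def)
qed

lemma card_nonzero_squares:
  "prime p \<Longrightarrow> 2 < p \<Longrightarrow> card (nonzero_squares p) = (p - 1) div 2"
  using bij_betw_same_card[OF bij_betw_square_mod, of p] by simp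

section \<open>The quadratic Gauss sum\<close>

text \<open>\<open>num_sqrt p y\<close> is the number of square roots of \<open>y\<close> modulo \<open>p\<close>, so \<open>square_sum p d\<close> is
  the sum of \<open>e(-x\<^sup>2 d)\<close> over \<open>x\<close> modulo \<open>p\<close>.\<close>

definition num_sqrt :: "nat \<Rightarrow> int \<Rightarrow> int" where
  "num_sqrt p y = 1 + Legendre y (int p)"

definition square_sum :: "nat \<Rightarrow> int \<Rightarrow> complex" where
  "square_sum p d = (\<Sum>y\<in>{0..<int p}. of_int (num_sqrt p y) * ep_int p (- (y * d)))"

definition gauss_sum :: "nat \<Rightarrow> complex" where
  "gauss_sum p = (\<Sum>y\<in>{0..<int p}. of_int (Legendre y (int p)) * ep_int p (- y))"

lemma num_sqrt_nonzero_square: "y \<in> nonzero_squares p \<Longrightarrow> num_sqrt p y = 2"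
  unfolding nonzero_squares_def num_sqrt_def using Legendre_in_range[of y p] by auto

lemma sum_num_sqrt_mult:
  fixes f :: "int \<Rightarrow> 'a::comm_ring_1"
  assumes "p > 0"
  shows "(\<Sum>y\<in>{0..<int p}. of_int (num_sqrt p y) * f y) = f 0 + 2 * (\<Sum>y\<in>nonzero_squares p. f y)"
proof -
  have "{0..<int p} = insert 0 {1..<int p}" using assms by auto
  then have "(\<Sum>y\<in>{0..<int p}. of_int (num_sqrt p y) * f y)
      = f 0 + (\<Sum>y\<in>{1..<int p}. of_int (num_sqrt p y) * f y)"
    by (simp add: num_sqrt_def)
  also have "(\<Sum>y\<in>{1..<int p}. of_int (num_sqrt p y) * f y)
      = (\<Sum>y\<in>{1..<int p}. if QuadRes (int p) y then 2 * f y else 0)"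
    by (intro sum.cong refl) (simp add: num_sqrt_def Legendre_in_range)
  also have "\<dots> = (\<Sum>y\<in>{y \<in> {1..<int p}. QuadRes (int p) y}. 2 * f y)"
    by (rule sum.inter_filter[symmetric]) simp
  also have "\<dots> = (\<Sum>y\<in>nonzero_squares p. 2 * f y)"
    unfolding nonzero_squares_def ..
  finally show ?thesis by (simp add: sum_distrib_left)
qed

lemma square_sum_eq_sum_squares:
  assumes "prime p" "2 < p"
  shows "square_sum p d = 1 + 2 * (\<Sum>i\<in>{1..<(p + 1) div 2}. ep_int p (- ((int i)\<^sup>2 * d)))"
proof -
  have p0: "p > 0" using assms by simp
  have "(\<Sum>i\<in>{1..<(p + 1) div 2}. ep_int p (- ((int i)\<^sup>2 * d)))
      = (\<Sum>i\<in>{1..<(p + 1) div 2}. ep_int p (- (((int i)\<^sup>2 mod int p) * d)))"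
  proof (intro sum.cong refl ep_int_cong[OF p0])
    fix i :: nat
    show "[- ((int i)\<^sup>2 * d) = - (((int i)\<^sup>2 mod int p) * d)] (mod int p)"
      by (intro cong_minus_minus_iff[THEN iffD2] cong_mult cong_refl) (simp add: cong_def)
  qed
  also have "\<dots> = (\<Sum>y\<in>nonzero_squares p. ep_int p (- (y * d)))"
    by (rule sum.reindex_bij_betw[OF bij_betw_square_mod[OF assms]])
  finally show ?thesis
    unfolding square_sum_def sum_num_sqrt_mult[OF p0] by simp
qed

lemma square_sum_0:
  assumes "prime p" "2 < p"
  shows "square_sum p 0 = of_nat p"
proof -
  have "square_sum p 0 = of_nat (1 + 2 * card (nonzero_squares p))"
    unfolding square_sum_def using sum_num_sqrt_mult[of p "\<lambda>y. 1 :: complex"] assms by simp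
  also have "1 + 2 * card (nonzero_squares p) = p"
    using card_nonzero_squares[OF assms] prime_odd_nat[OF assms(1)] assms(2)
    by (auto elim!: oddE)
  finally show ?thesis .
qed

text \<open>Substituting \<open>y \<mapsto> d y\<close> pulls out the character \<open>Legendre d\<close>; the constant part of
  \<open>num_sqrt\<close> contributes nothing for \<open>d \<noteq> 0\<close> by orthogonality.\<close>

lemma square_sum_nondvd:
  assumes "prime p" "2 < p" "\<not> int p dvd d"
  shows "square_sum p d = of_int (Legendre d (int p)) * gauss_sum p"
proof -
  have p0: "p > 0" using assms by simp
  let ?L = "\<lambda>y. of_int (Legendre y (int p)) :: complex"
  have "square_sum p d = (\<Sum>y\<in>{0..<int p}. ep_int p (- d * y))
      + (\<Sum>y\<in>{0..<int p}. ?L y * ep_int p (- (y * d)))"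
    unfolding square_sum_def num_sqrt_def by (simp add: sum.distrib algebra_simps)
  also have "(\<Sum>y\<in>{0..<int p}. ep_int p (- d * y)) = 0"
    using sum_ep_int_mult[OF p0, of "- d"] assms(3) by simp
  also have "(\<Sum>y\<in>{0..<int p}. ?L y * ep_int p (- (y * d)))
      = (\<Sum>y\<in>{0..<int p}. ?L d * (?L ((d * y) mod int p) * ep_int p (- ((d * y) mod int p))))"
  proof (intro sum.cong refl)
    fix y
    have "Legendre d (int p) * Legendre ((d * y) mod int p) (int p) = Legendre y (int p)"
      using Legendre_mult[OF assms(1,2)] Legendre_square[OF assms(3)]
      by (simp add: Legendre_mod mult.assoc[symmetric])
    moreover have "ep_int p (- ((d * y) mod int p)) = ep_int p (- (y * d))"
      by (intro ep_int_cong[OF p0] cong_minus_minus_iff[THEN iffD2])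
        (simp add: cong_def mult.commute)
    ultimately show "?L y * ep_int p (- (y * d))
        = ?L d * (?L ((d * y) mod int p) * ep_int p (- ((d * y) mod int p)))"
      by (metis (no_types, lifting) mult.assoc of_int_mult)
  qed
  also have "\<dots> = ?L d * (\<Sum>y\<in>{0..<int p}. ?L ((d * y) mod int p) * ep_int p (- ((d * y) mod int p)))"
    by (simp add: sum_distrib_left)
  also have "(\<Sum>y\<in>{0..<int p}. ?L ((d * y) mod int p) * ep_int p (- ((d * y) mod int p)))
      = gauss_sum p"
    unfolding gauss_sum_def
    by (rule sum.reindex_bij_betw[OF bij_betw_mult_mod[OF assms(1,3)]])
  finally show ?thesis by simp
qed

lemma sum_square_sum_norm:
  assumes "p > 0"
  shows "(\<Sum>d\<in>{0..<int p}. square_sum p d * cnj (square_sum p d))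
    = of_nat p * (\<Sum>y\<in>{0..<int p}. of_int (num_sqrt p y * num_sqrt p y))"
proof -
  let ?P = "{0..<int p}" and ?w = "num_sqrt p"
  have "(\<Sum>d\<in>?P. square_sum p d * cnj (square_sum p d))
      = (\<Sum>d\<in>?P. \<Sum>y\<in>?P. \<Sum>z\<in>?P. of_int (?w y * ?w z) * ep_int p ((z - y) * d))"
  proof (intro sum.cong refl)
    fix d
    have "square_sum p d * cnj (square_sum p d) = (\<Sum>y\<in>?P. \<Sum>z\<in>?P.
        (of_int (?w y) * ep_int p (- (y * d))) * (of_int (?w z) * ep_int p (z * d)))"
      unfolding square_sum_def by (simp add: sum_product cnj_ep_int)
    also have "\<dots> = (\<Sum>y\<in>?P. \<Sum>z\<in>?P. of_int (?w y * ?w z) * ep_int p ((z - y) * d))"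
      by (simp add: ep_int_add[symmetric] algebra_simps)
    finally show "square_sum p d * cnj (square_sum p d)
        = (\<Sum>y\<in>?P. \<Sum>z\<in>?P. of_int (?w y * ?w z) * ep_int p ((z - y) * d))" .
  qed
  also have "\<dots> = (\<Sum>y\<in>?P. \<Sum>d\<in>?P. \<Sum>z\<in>?P. of_int (?w y * ?w z) * ep_int p ((z - y) * d))"
    by (rule sum.swap)
  also have "\<dots> = (\<Sum>y\<in>?P. \<Sum>z\<in>?P. \<Sum>d\<in>?P. of_int (?w y * ?w z) * ep_int p ((z - y) * d))"
    by (intro sum.cong refl sum.swap)
  also have "\<dots> = (\<Sum>y\<in>?P. \<Sum>z\<in>?P. of_int (?w y * ?w z) * (\<Sum>d\<in>?P. ep_int p ((z - y) * d)))"
    by (simp add: sum_distrib_left)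
  also have "\<dots> = (\<Sum>y\<in>?P. \<Sum>z\<in>?P. of_int (?w y * ?w z) * (if z = y then of_nat p else 0))"
  proof (intro sum.cong refl)
    fix y z assume "y \<in> ?P" "z \<in> ?P"
    then have "int p dvd (z - y) \<longleftrightarrow> z = y" using dvd_diff_imp_eq_int by auto
    then show "of_int (?w y * ?w z) * (\<Sum>d\<in>?P. ep_int p ((z - y) * d))
        = of_int (?w y * ?w z) * (if z = y then of_nat p else 0)"
      by (simp add: sum_ep_int_mult[OF assms])
  qed
  also have "\<dots> = of_nat p * (\<Sum>y\<in>?P. of_int (?w y * ?w y))"
    by (simp add: if_distrib sum_distrib_left mult.commute cong: if_cong)
  finally show ?thesis .
qed

lemma sum_num_sqrt_squared:
  assumes "prime p" "2 < p"
  shows "(\<Sum>y\<in>{0..<int p}. (of_int (num_sqrt p y * num_sqrt p y) :: complex)) = 2 * of_nat p - 1"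
proof -
  have "(\<Sum>y\<in>{0..<int p}. (of_int (num_sqrt p y * num_sqrt p y) :: complex))
      = of_int (num_sqrt p 0) + 2 * (\<Sum>y\<in>nonzero_squares p. of_int (num_sqrt p y))"
    using sum_num_sqrt_mult[of p "\<lambda>y. of_int (num_sqrt p y) :: complex"] assms by simp
  also have "of_int (num_sqrt p 0) = (1 :: complex)"
    by (simp add: num_sqrt_def)
  also have "(\<Sum>y\<in>nonzero_squares p. (of_int (num_sqrt p y) :: complex))
      = (\<Sum>y\<in>nonzero_squares p. 2)"
    by (intro sum.cong refl) (simp add: num_sqrt_nonzero_square)
  also have "1 + 2 * (\<Sum>y\<in>nonzero_squares p. 2) = (of_nat (1 + 4 * card (nonzero_squares p)) :: complex)"
    by simp
  also have "1 + 4 * card (nonzero_squares p) = 2 * p - 1"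
    using card_nonzero_squares[OF assms] prime_odd_nat[OF assms(1)] assms(2)
    by (auto elim!: oddE)
  finally show ?thesis using assms(2) by (simp add: of_nat_diff)
qed

text \<open>Parseval: the \<open>d = 0\<close> term contributes \<open>p\<^sup>2\<close> and each of the other \<open>p - 1\<close> terms
  contributes \<open>|g|\<^sup>2\<close>, while the right-hand side is \<open>p (2 p - 1)\<close>.\<close>

lemma norm_gauss_sum:
  assumes "prime p" "2 < p"
  shows "cmod (gauss_sum p) = sqrt (real p)"
proof -
  have p0: "p > 0" using assms by simp
  let ?g = "gauss_sum p * cnj (gauss_sum p)"
  have "{0..<int p} = insert 0 {1..<int p}" using p0 by auto
  then have "(\<Sum>d\<in>{0..<int p}. square_sum p d * cnj (square_sum p d))
      = of_nat p * of_nat p + (\<Sum>d\<in>{1..<int p}. square_sum p d * cnj (square_sum p d))"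
    using square_sum_0[OF assms] by simp
  also have "(\<Sum>d\<in>{1..<int p}. square_sum p d * cnj (square_sum p d)) = (\<Sum>d\<in>{1..<int p}. ?g)"
  proof (intro sum.cong refl)
    fix d assume "d \<in> {1..<int p}"
    then have nd: "\<not> int p dvd d" using zdvd_not_zless[of d "int p"] by auto
    have "square_sum p d * cnj (square_sum p d) = of_int (Legendre d (int p) * Legendre d (int p)) * ?g"
      using square_sum_nondvd[OF assms nd] by (simp add: algebra_simps)
    then show "square_sum p d * cnj (square_sum p d) = ?g" using Legendre_square[OF nd] by simp
  qed
  also have "\<dots> = of_nat (p - 1) * ?g"
    using p0 by (simp add: of_nat_diff)
  finally have "of_nat p * (2 * of_nat p - 1) = of_nat p * of_nat p + of_nat (p - 1) * ?g"
    using sum_square_sum_norm[OF p0] sum_num_sqrt_squared[OF assms] by simp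
  then have "of_nat (p - 1) * ?g = of_nat (p - 1) * of_nat p"
    using p0 by (simp add: of_nat_diff algebra_simps)
  then have "?g = of_nat p" using assms by simp
  then have "complex_of_real ((cmod (gauss_sum p))\<^sup>2) = of_real (real p)"
    using complex_norm_square[of "gauss_sum p"] by simp
  then have "(cmod (gauss_sum p))\<^sup>2 = real p"
    using of_real_eq_iff by blast
  then show ?thesis by (simp add: real_sqrt_unique)
qed

section \<open>The Gram matrix of the Paley matrix\<close>

definition paley_scale :: "nat \<Rightarrow> nat \<Rightarrow> real" where
  "paley_scale p i = (if i = 0 then sqrt (1 / real p) else sqrt (2 / real p))"

lemma paley_matrix_eq:
  "j < p \<Longrightarrow> paley_matrix p i j = of_real (paley_scale p i) * ep_int p (- ((int i)\<^sup>2 * int j))"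
  unfolding paley_matrix_def paley_scale_def ep_int_def by simp

lemma paley_matrix_last_column: "paley_matrix p i p = (if i = 0 then 1 else 0)"
  unfolding paley_matrix_def by simp

definition paley_gram :: "nat \<Rightarrow> nat \<Rightarrow> nat \<Rightarrow> complex" where
  "paley_gram p j k = (\<Sum>i<(p + 1) div 2. paley_matrix p i j * cnj (paley_matrix p i k))"

lemma paley_gram_eq:
  assumes "prime p" "2 < p" "j < p" "k < p"
  shows "paley_gram p j k
    = (if j = k then 1 else 0) + of_int (chi p (int j - int k)) * gauss_sum p / of_nat p"
proof -
  define d where "d = int j - int k"
  have rows: "{..<(p + 1) div 2} = insert 0 {1..<(p + 1) div 2}" using assms by auto
  have entry: "paley_matrix p i j * cnj (paley_matrix p i k)
      = of_real (paley_scale p i * paley_scale p i) * ep_int p (- ((int i)\<^sup>2 * d))" for i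
  proof -
    have "ep_int p (- ((int i)\<^sup>2 * int j)) * cnj (ep_int p (- ((int i)\<^sup>2 * int k)))
        = ep_int p (- ((int i)\<^sup>2 * d))"
      unfolding ep_int_mult_cnj d_def by (simp add: algebra_simps)
    then show ?thesis
      using paley_matrix_eq[OF assms(3), of i] paley_matrix_eq[OF assms(4), of i]
      by (simp add: algebra_simps)
  qed
  have "paley_gram p j k = of_real (1 / real p)
      + (\<Sum>i\<in>{1..<(p + 1) div 2}. of_real (2 / real p) * ep_int p (- ((int i)\<^sup>2 * d)))"
    unfolding paley_gram_def rows entry
    by (subst sum.insert) (auto simp: paley_scale_def intro!: sum.cong)
  also have "\<dots> = square_sum p d / of_nat p"
    unfolding square_sum_eq_sum_squares[OF assms(1,2)]
    by (simp add: sum_distrib_left add_divide_distrib flip: sum_divide_distrib)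
  finally have gram: "paley_gram p j k = square_sum p d / of_nat p" .
  show ?thesis
  proof (cases "j = k")
    case True
    then show ?thesis using gram square_sum_0[OF assms(1,2)] assms by (simp add: d_def)
  next
    case False
    then have "\<not> int p dvd d"
      using dvd_diff_imp_eq_int[of "int j" "int p" "int k"] assms(3,4) by (auto simp: d_def)
    then show ?thesis
      using gram square_sum_nondvd[OF assms(1,2)] False by (simp add: chi_def d_def)
  qed
qed

lemma paley_gram_last_column: "j < p \<Longrightarrow> paley_gram p j p = of_real (sqrt (1 / real p))"
  using sum.lessThan_Suc_shift[of "\<lambda>i. paley_matrix p i j * cnj (paley_matrix p i p)"]
  by (cases "(p + 1) div 2")
    (simp_all add: paley_gram_def paley_matrix_last_column paley_matrix_eq paley_scale_def)

lemma paley_gram_last_row: "k < p \<Longrightarrow> paley_gram p p k = of_real (sqrt (1 / real p))"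
  using sum.lessThan_Suc_shift[of "\<lambda>i. paley_matrix p i p * cnj (paley_matrix p i k)"]
  by (cases "(p + 1) div 2")
    (simp_all add: paley_gram_def paley_matrix_last_column paley_matrix_eq paley_scale_def cnj_ep_int)

lemma paley_gram_corner: "p > 0 \<Longrightarrow> paley_gram p p p = 1"
  using sum.lessThan_Suc_shift[of "\<lambda>i. paley_matrix p i p * cnj (paley_matrix p i p)"]
  by (cases "(p + 1) div 2") (simp_all add: paley_gram_def paley_matrix_last_column)

lemma sum_norm_matrix_mult_squared:
  fixes Phi :: "nat \<Rightarrow> nat \<Rightarrow> complex" and x :: "nat \<Rightarrow> real"
  shows "complex_of_real (\<Sum>i<M. (cmod (\<Sum>j<N. Phi i j * complex_of_real (x j)))\<^sup>2)
       = (\<Sum>j<N. \<Sum>k<N. of_real (x j * x k) * (\<Sum>i<M. Phi i j * cnj (Phi i k)))"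
proof -
  have "complex_of_real (\<Sum>i<M. (cmod (\<Sum>j<N. Phi i j * complex_of_real (x j)))\<^sup>2)
      = (\<Sum>i<M. (\<Sum>j<N. Phi i j * of_real (x j)) * cnj (\<Sum>k<N. Phi i k * of_real (x k)))"
    unfolding of_real_sum by (intro sum.cong refl complex_norm_square)
  also have "\<dots> = (\<Sum>i<M. \<Sum>j<N. \<Sum>k<N. of_real (x j * x k) * (Phi i j * cnj (Phi i k)))"
    by (simp add: sum_product algebra_simps)
  also have "\<dots> = (\<Sum>j<N. \<Sum>i<M. \<Sum>k<N. of_real (x j * x k) * (Phi i j * cnj (Phi i k)))"
    by (rule sum.swap)
  also have "\<dots> = (\<Sum>j<N. \<Sum>k<N. \<Sum>i<M. of_real (x j * x k) * (Phi i j * cnj (Phi i k)))"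
    by (intro sum.cong refl sum.swap)
  finally show ?thesis by (simp add: sum_distrib_left)
qed

definition chi_form :: "nat \<Rightarrow> (nat \<Rightarrow> real) \<Rightarrow> real" where
  "chi_form p x = (\<Sum>j<p. \<Sum>k<p. x j * x k * real_of_int (chi p (int j - int k)))"

lemma paley_norm_squared_eq:
  fixes x :: "nat \<Rightarrow> real"
  assumes "prime p" "2 < p"
  shows "complex_of_real (\<Sum>i<(p + 1) div 2. (cmod (\<Sum>j<p + 1. paley_matrix p i j * of_real (x j)))\<^sup>2)
     = of_real ((\<Sum>j<p + 1. (x j)\<^sup>2) + 2 * sqrt (1 / real p) * x p * (\<Sum>j<p. x j))
       + gauss_sum p / of_nat p * of_real (chi_form p x)"
proof -
  let ?a = "\<lambda>j k. of_real (x j * x k) * paley_gram p j k"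
  have "complex_of_real (\<Sum>i<(p + 1) div 2. (cmod (\<Sum>j<p + 1. paley_matrix p i j * of_real (x j)))\<^sup>2)
      = (\<Sum>j<p. \<Sum>k<p. ?a j k) + (\<Sum>j<p. ?a j p) + (\<Sum>k<p. ?a p k) + ?a p p"
    unfolding sum_norm_matrix_mult_squared paley_gram_def[symmetric]
    by (simp add: sum.distrib algebra_simps)
  also have "(\<Sum>j<p. \<Sum>k<p. ?a j k) = (\<Sum>j<p. \<Sum>k<p. (if j = k then of_real (x j * x k) else 0)
        + gauss_sum p / of_nat p * of_real (x j * x k * real_of_int (chi p (int j - int k))))"
    by (intro sum.cong refl) (simp add: paley_gram_eq[OF assms] algebra_simps)
  also have "\<dots> = (\<Sum>j<p. of_real ((x j)\<^sup>2))
      + gauss_sum p / of_nat p * (\<Sum>j<p. \<Sum>k<p. of_real (x j * x k * real_of_int (chi p (int j - int k))))"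
    by (simp add: sum.distrib sum_distrib_left sum.delta power2_eq_square)
  also have "(\<Sum>j<p. ?a j p) = (\<Sum>j<p. of_real (sqrt (1 / real p) * x p * x j))"
    by (simp add: paley_gram_last_column algebra_simps)
  also have "(\<Sum>k<p. ?a p k) = (\<Sum>j<p. of_real (sqrt (1 / real p) * x p * x j))"
    by (simp add: paley_gram_last_row algebra_simps)
  also have "?a p p = of_real ((x p)\<^sup>2)"
    using assms by (simp add: paley_gram_corner power2_eq_square)
  finally show ?thesis
    unfolding chi_form_def by (simp add: sum_distrib_left algebra_simps)
qed

section \<open>Summation by parts along level sets\<close>

definition upper_count :: "'a set \<Rightarrow> ('a \<Rightarrow> real) \<Rightarrow> 'a \<Rightarrow> nat" where
  "upper_count S u i = card {j \<in> S. u i \<le> u j}"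

definition rank_weight :: "'a set \<Rightarrow> ('a \<Rightarrow> real) \<Rightarrow> real" where
  "rank_weight S u = (\<Sum>i\<in>S. u i / sqrt (real (upper_count S u i)))"

lemma upper_count_pos: "finite S \<Longrightarrow> i \<in> S \<Longrightarrow> 1 \<le> upper_count S u i"
  unfolding upper_count_def by (auto simp: Suc_le_eq card_gt_0_iff)

lemma upper_count_le_card: "finite S \<Longrightarrow> upper_count S u i \<le> card S"
  unfolding upper_count_def by (intro card_mono) auto

lemma sqrt_card_le_sum_upper_count:
  assumes "finite S"
  shows "sqrt (real (card S)) \<le> (\<Sum>i\<in>S. 1 / sqrt (real (upper_count S u i)))"
proof -
  have "sqrt (real (card S)) = (\<Sum>i\<in>S. 1 / sqrt (real (card S)))"
    by (cases "card S = 0") (simp_all add: real_div_sqrt)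
  also have "\<dots> \<le> (\<Sum>i\<in>S. 1 / sqrt (real (upper_count S u i)))"
    using upper_count_pos[OF assms] upper_count_le_card[OF assms] assms
    by (intro sum_mono divide_left_mono) (auto intro!: mult_pos_pos simp: card_gt_0_iff Suc_le_eq)
  finally show ?thesis .
qed

lemma rank_weight_split_min:
  assumes "finite S" "\<And>i. i \<in> S \<Longrightarrow> m \<le> u i"
  shows "rank_weight S u = m * (\<Sum>i\<in>S. 1 / sqrt (real (upper_count S u i)))
    + rank_weight {i \<in> S. m < u i} (\<lambda>i. u i - m)"
proof -
  let ?S' = "{i \<in> S. m < u i}"
  have strict: "m < u i" if "i \<in> S" "u i \<noteq> m" for i
    using assms(2)[OF that(1)] that(2) by simp
  have "upper_count ?S' (\<lambda>i. u i - m) i = upper_count S u i" if "i \<in> ?S'" for i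
  proof -
    have "{j \<in> ?S'. u i - m \<le> u j - m} = {j \<in> S. u i \<le> u j}" using that by auto
    then show ?thesis unfolding upper_count_def by simp
  qed
  then have "rank_weight ?S' (\<lambda>i. u i - m) = (\<Sum>i\<in>?S'. (u i - m) / sqrt (real (upper_count S u i)))"
    unfolding rank_weight_def by simp
  also have "\<dots> = (\<Sum>i\<in>S. (u i - m) / sqrt (real (upper_count S u i)))"
    using assms(1) strict by (intro sum.mono_neutral_left) auto
  finally show ?thesis
    unfolding rank_weight_def
    by (simp add: sum_distrib_left diff_divide_distrib flip: sum.distrib)
qed

text \<open>Peeling off the minimum level \<open>m\<close> of \<open>u\<close> splits \<open>\<Sum> c u\<close> into \<open>m \<Sum> c\<close> over all of
  \<open>S\<close> plus \<open>\<Sum> c (u - m)\<close> over \<open>{u > m}\<close>; the hypothesis bounds the first part and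
  induction the second.\<close>

lemma abs_sum_mult_le_rank_weight:
  fixes c u :: "'a \<Rightarrow> real"
  assumes "finite S" "\<And>A. A \<subseteq> S \<Longrightarrow> \<bar>\<Sum>i\<in>A. c i\<bar> \<le> R * sqrt (real (card A))"
    "\<And>i. i \<in> S \<Longrightarrow> 0 \<le> u i" "0 \<le> R"
  shows "\<bar>\<Sum>i\<in>S. c i * u i\<bar> \<le> R * rank_weight S u"
  using assms
proof (induction "card S" arbitrary: S u rule: less_induct)
  case less
  show ?case
  proof (cases "S = {}")
    case True
    then show ?thesis by (simp add: rank_weight_def)
  next
    case False
    define m where "m = Min (u ` S)"
    define S' where "S' = {i \<in> S. m < u i}"
    have m_le: "i \<in> S \<Longrightarrow> m \<le> u i" for i
      unfolding m_def using less.prems(1) by simp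
    have strict: "m < u i" if "i \<in> S" "u i \<noteq> m" for i
      using m_le[OF that(1)] that(2) by simp
    have "m \<in> u ` S" unfolding m_def using False less.prems(1) by simp
    then have "0 \<le> m" "S' \<subset> S" using less.prems(3) by (auto simp: S'_def)
    then have IH: "\<bar>\<Sum>i\<in>S'. c i * (u i - m)\<bar> \<le> R * rank_weight S' (\<lambda>i. u i - m)"
      using less.prems by (intro less.hyps psubset_card_mono) (auto simp: S'_def)
    have "(\<Sum>i\<in>S. c i * u i) = m * (\<Sum>i\<in>S. c i) + (\<Sum>i\<in>S. c i * (u i - m))"
      by (simp add: sum_distrib_left algebra_simps flip: sum.distrib)
    also have "(\<Sum>i\<in>S. c i * (u i - m)) = (\<Sum>i\<in>S'. c i * (u i - m))"
      using less.prems(1) strict by (intro sum.mono_neutral_right) (auto simp: S'_def)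
    finally have "\<bar>\<Sum>i\<in>S. c i * u i\<bar> \<le> m * \<bar>\<Sum>i\<in>S. c i\<bar> + \<bar>\<Sum>i\<in>S'. c i * (u i - m)\<bar>"
      using \<open>0 \<le> m\<close> by (simp add: abs_mult order_trans[OF abs_triangle_ineq])
    also have "\<dots> \<le> m * (R * sqrt (real (card S))) + R * rank_weight S' (\<lambda>i. u i - m)"
      using less.prems(2)[of S] \<open>0 \<le> m\<close> IH by (intro add_mono mult_left_mono) auto
    also have "\<dots> \<le> R * (m * (\<Sum>i\<in>S. 1 / sqrt (real (upper_count S u i))))
        + R * rank_weight S' (\<lambda>i. u i - m)"
      using sqrt_card_le_sum_upper_count[OF less.prems(1), of u] \<open>0 \<le> m\<close> \<open>0 \<le> R\<close>
      by (simp add: mult.left_commute mult_left_mono)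
    also have "\<dots> = R * rank_weight S u"
      using rank_weight_split_min[OF less.prems(1) m_le] by (simp add: S'_def distrib_left)
    finally show ?thesis .
  qed
qed

lemma rank_weight_le:
  "rank_weight S u \<le> sqrt (\<Sum>i\<in>S. (u i)\<^sup>2) * sqrt (\<Sum>i\<in>S. 1 / real (upper_count S u i))"
proof -
  have "(rank_weight S u)\<^sup>2
      \<le> (\<Sum>i\<in>S. (u i)\<^sup>2) * (\<Sum>i\<in>S. (1 / sqrt (real (upper_count S u i)))\<^sup>2)"
    unfolding rank_weight_def
    using Cauchy_Schwarz_ineq_sum[of u "\<lambda>i. 1 / sqrt (real (upper_count S u i))" S]
    by (simp add: divide_inverse)
  also have "(\<Sum>i\<in>S. (1 / sqrt (real (upper_count S u i)))\<^sup>2) = (\<Sum>i\<in>S. 1 / real (upper_count S u i))"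
    by (simp add: power_divide)
  finally show ?thesis
    by (metis real_le_rsqrt real_sqrt_abs real_sqrt_le_mono real_sqrt_mult abs_ge_self order_trans)
qed

lemma sum_inverse_upper_count_le_harm:
  "finite S \<Longrightarrow> (\<Sum>i\<in>S. 1 / real (upper_count S u i)) \<le> harm (card S)"
proof (induction "card S" arbitrary: S)
  case 0
  then show ?case by (simp add: harm_def)
next
  case (Suc n)
  then have "S \<noteq> {}" by auto
  then obtain i0 where i0: "i0 \<in> S" "u i0 = Min (u ` S)"
    using Suc.prems by (metis (mono_tags, lifting) Min_in finite_imageI image_iff image_is_empty)
  then have "u i0 \<le> u i" if "i \<in> S" for i using Suc.prems that by simp
  then have "{j \<in> S. u i0 \<le> u j} = S" by auto
  then have top: "upper_count S u i0 = Suc n"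
    unfolding upper_count_def using Suc.hyps(2) by simp
  define S' where "S' = S - {i0}"
  have S': "finite S'" "card S' = n"
    using Suc.hyps(2) Suc.prems i0(1) unfolding S'_def by auto
  have "(\<Sum>i\<in>S. 1 / real (upper_count S u i)) = 1 / real (Suc n) + (\<Sum>i\<in>S'. 1 / real (upper_count S u i))"
    unfolding S'_def using Suc.prems i0(1) top by (simp add: sum.remove)
  also have "(\<Sum>i\<in>S'. 1 / real (upper_count S u i)) \<le> (\<Sum>i\<in>S'. 1 / real (upper_count S' u i))"
  proof (rule sum_mono)
    fix i assume "i \<in> S'"
    have "upper_count S' u i \<le> upper_count S u i"
      unfolding upper_count_def S'_def using Suc.prems by (intro card_mono) auto
    moreover have "1 \<le> upper_count S' u i" using upper_count_pos[OF S'(1) \<open>i \<in> S'\<close>] .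
    ultimately show "1 / real (upper_count S u i) \<le> 1 / real (upper_count S' u i)"
      by (intro divide_left_mono) auto
  qed
  also have "\<dots> \<le> harm n" using Suc.hyps(1)[OF S'(2)[symmetric] S'(1)] S'(2) by simp
  finally show ?case by (simp add: harm_Suc divide_inverse flip: Suc.hyps(2))
qed

lemma abs_sum_mult_le_harm:
  fixes c u :: "'a \<Rightarrow> real"
  assumes "finite S" "\<And>A. A \<subseteq> S \<Longrightarrow> \<bar>\<Sum>i\<in>A. c i\<bar> \<le> R * sqrt (real (card A))"
    "\<And>i. i \<in> S \<Longrightarrow> 0 \<le> u i" "0 \<le> R"
  shows "\<bar>\<Sum>i\<in>S. c i * u i\<bar> \<le> R * sqrt (harm (card S)) * sqrt (\<Sum>i\<in>S. (u i)\<^sup>2)"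
proof -
  have "\<bar>\<Sum>i\<in>S. c i * u i\<bar> \<le> R * rank_weight S u"
    by (rule abs_sum_mult_le_rank_weight[OF assms])
  also have "\<dots> \<le> R * (sqrt (\<Sum>i\<in>S. (u i)\<^sup>2) * sqrt (\<Sum>i\<in>S. 1 / real (upper_count S u i)))"
    using rank_weight_le assms(4) by (rule mult_left_mono)
  also have "\<dots> \<le> R * (sqrt (\<Sum>i\<in>S. (u i)\<^sup>2) * sqrt (harm (card S)))"
    using sum_inverse_upper_count_le_harm[OF assms(1), of u] assms(4)
    by (intro mult_left_mono real_sqrt_le_mono) (auto intro: sum_nonneg)
  finally show ?thesis by (simp add: algebra_simps)
qed

lemma abs_bilinear_sum_le_harm:
  fixes K :: "'a \<Rightarrow> 'a \<Rightarrow> real" and u v :: "'a \<Rightarrow> real"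
  assumes "finite T"
    and K: "\<And>A B. A \<subseteq> T \<Longrightarrow> B \<subseteq> T \<Longrightarrow>
      \<bar>\<Sum>a\<in>A. \<Sum>b\<in>B. K a b\<bar> \<le> \<rho> * sqrt (real (card A)) * sqrt (real (card B))"
    and "0 \<le> \<rho>" "\<And>i. i \<in> T \<Longrightarrow> 0 \<le> u i" "\<And>i. i \<in> T \<Longrightarrow> 0 \<le> v i"
  shows "\<bar>\<Sum>a\<in>T. \<Sum>b\<in>T. u a * v b * K a b\<bar>
     \<le> \<rho> * harm (card T) * sqrt (\<Sum>i\<in>T. (u i)\<^sup>2) * sqrt (\<Sum>i\<in>T. (v i)\<^sup>2)"
proof -
  let ?h = "sqrt (harm (card T)) :: real" and ?nv = "sqrt (\<Sum>i\<in>T. (v i)\<^sup>2)"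
  have inner: "\<bar>\<Sum>a\<in>A. \<Sum>b\<in>T. v b * K a b\<bar> \<le> \<rho> * ?h * ?nv * sqrt (real (card A))"
    if "A \<subseteq> T" for A
  proof -
    have "(\<Sum>a\<in>A. \<Sum>b\<in>T. v b * K a b) = (\<Sum>b\<in>T. (\<Sum>a\<in>A. K a b) * v b)"
      unfolding sum_distrib_right by (subst sum.swap) (simp add: mult.commute)
    also have "\<bar>\<dots>\<bar> \<le> \<rho> * sqrt (real (card A)) * ?h * ?nv"
    proof (intro abs_sum_mult_le_harm)
      show "\<bar>\<Sum>b\<in>B. \<Sum>a\<in>A. K a b\<bar> \<le> \<rho> * sqrt (real (card A)) * sqrt (real (card B))"
        if "B \<subseteq> T" for B
        using K[OF \<open>A \<subseteq> T\<close> that] by (simp add: sum.swap[of _ B])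
    qed (use assms in auto)
    finally show ?thesis by (simp only: mult_ac)
  qed
  have "\<bar>\<Sum>a\<in>T. (\<Sum>b\<in>T. v b * K a b) * u a\<bar> \<le> (\<rho> * ?h * ?nv) * ?h * sqrt (\<Sum>i\<in>T. (u i)\<^sup>2)"
    using assms(1,3,4) inner
    by (intro abs_sum_mult_le_harm) (auto intro!: mult_nonneg_nonneg sum_nonneg simp: harm_nonneg)
  moreover have "(\<rho> * ?h * ?nv) * ?h * sqrt (\<Sum>i\<in>T. (u i)\<^sup>2)
      = \<rho> * (?h * ?h) * sqrt (\<Sum>i\<in>T. (u i)\<^sup>2) * ?nv"
    by (simp only: mult_ac)
  moreover have "?h * ?h = harm (card T)" by (simp add: harm_nonneg)
  moreover have "(\<Sum>a\<in>T. \<Sum>b\<in>T. u a * v b * K a b) = (\<Sum>a\<in>T. (\<Sum>b\<in>T. v b * K a b) * u a)"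
    by (simp add: sum_distrib_left sum_distrib_right algebra_simps)
  ultimately show ?thesis by simp
qed

text \<open>Split \<open>x\<close> into its positive and negative parts.\<close>

lemma abs_quadratic_sum_le_harm:
  fixes K :: "'a \<Rightarrow> 'a \<Rightarrow> real" and x :: "'a \<Rightarrow> real"
  assumes "finite T"
    and K: "\<And>A B. A \<subseteq> T \<Longrightarrow> B \<subseteq> T \<Longrightarrow>
      \<bar>\<Sum>a\<in>A. \<Sum>b\<in>B. K a b\<bar> \<le> \<rho> * sqrt (real (card A)) * sqrt (real (card B))"
    and "0 \<le> \<rho>"
  shows "\<bar>\<Sum>a\<in>T. \<Sum>b\<in>T. x a * x b * K a b\<bar> \<le> 2 * \<rho> * harm (card T) * (\<Sum>i\<in>T. (x i)\<^sup>2)"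
proof -
  define u where "u i = max (x i) 0" for i
  define v where "v i = max (- x i) 0" for i
  let ?B = "\<lambda>f g. \<Sum>a\<in>T. \<Sum>b\<in>T. f a * g b * K a b"
  let ?h = "harm (card T) :: real"
  define nu where "nu = sqrt (\<Sum>i\<in>T. (u i)\<^sup>2)"
  define nv where "nv = sqrt (\<Sum>i\<in>T. (v i)\<^sup>2)"
  have bound: "\<bar>?B f g\<bar> \<le> \<rho> * ?h * sqrt (\<Sum>i\<in>T. (f i)\<^sup>2) * sqrt (\<Sum>i\<in>T. (g i)\<^sup>2)"
    if "f \<in> {u, v}" "g \<in> {u, v}" for f g
    using that by (intro abs_bilinear_sum_le_harm[OF assms]) (auto simp: u_def v_def)
  have xuv: "x i = u i - v i" for i unfolding u_def v_def by auto
  have "(\<Sum>a\<in>T. \<Sum>b\<in>T. x a * x b * K a b) = ?B u u - ?B u v - ?B v u + ?B v v"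
    unfolding xuv by (simp add: sum_subtractf[symmetric] sum.distrib[symmetric] algebra_simps)
  then have "\<bar>\<Sum>a\<in>T. \<Sum>b\<in>T. x a * x b * K a b\<bar> \<le> \<bar>?B u u\<bar> + \<bar>?B u v\<bar> + \<bar>?B v u\<bar> + \<bar>?B v v\<bar>"
    by linarith
  also have "\<dots> \<le> \<rho> * ?h * (nu * nu + 2 * nu * nv + nv * nv)"
    using bound[of u u] bound[of u v] bound[of v u] bound[of v v]
    unfolding nu_def nv_def by (simp add: algebra_simps)
  also have "\<dots> \<le> \<rho> * ?h * (2 * (nu * nu + nv * nv))"
    using sum_squares_bound[of nu nv] assms(3) harm_nonneg[where 'a = real]
    by (intro mult_left_mono) (auto simp: power2_eq_square)
  also have "nu * nu + nv * nv = (\<Sum>i\<in>T. (x i)\<^sup>2)"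
  proof -
    have "(x i)\<^sup>2 = (u i)\<^sup>2 + (v i)\<^sup>2" for i
      unfolding u_def v_def by (auto simp: max_def power2_eq_square)
    then show ?thesis unfolding nu_def nv_def by (simp add: sum.distrib sum_nonneg)
  qed
  finally show ?thesis by (simp add: algebra_simps)
qed

section \<open>Restricted isometry from a bilinear character sum bound\<close>

lemma RIP_mono: "RIP Phi M N K \<delta> \<Longrightarrow> \<delta> \<le> \<delta>' \<Longrightarrow> RIP Phi M N K \<delta>'"
  unfolding RIP_def
  by (smt (verit, best) mult_right_mono sum_nonneg zero_le_power2)

lemma paley_norm_squared_deviation:
  fixes x :: "nat \<Rightarrow> real"
  assumes "prime p" "2 < p"
  shows "\<bar>(\<Sum>i<(p + 1) div 2. (cmod (\<Sum>j<p + 1. paley_matrix p i j * of_real (x j)))\<^sup>2)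
      - (\<Sum>j<p + 1. (x j)\<^sup>2) - 2 * sqrt (1 / real p) * x p * (\<Sum>j<p. x j)\<bar>
    = \<bar>chi_form p x\<bar> / sqrt (real p)"
proof -
  define D where "D = (\<Sum>i<(p + 1) div 2. (cmod (\<Sum>j<p + 1. paley_matrix p i j * of_real (x j)))\<^sup>2)
      - (\<Sum>j<p + 1. (x j)\<^sup>2) - 2 * sqrt (1 / real p) * x p * (\<Sum>j<p. x j)"
  have eq: "complex_of_real D = gauss_sum p / of_nat p * of_real (chi_form p x)"
    using paley_norm_squared_eq[OF assms, of x] unfolding D_def by simp
  have "\<bar>D\<bar> = norm (complex_of_real D)" by simp
  also have "\<dots> = norm (gauss_sum p / of_nat p * of_real (chi_form p x))"
    by (simp only: eq)
  also have "\<dots> = sqrt (real p) / real p * \<bar>chi_form p x\<bar>"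
    by (simp add: norm_mult norm_divide norm_gauss_sum[OF assms])
  also have "\<dots> = \<bar>chi_form p x\<bar> / sqrt (real p)"
    using assms(2) by (simp add: field_simps)
  finally show ?thesis unfolding D_def .
qed

lemma abs_chi_form_le:
  fixes x :: "nat \<Rightarrow> real"
  assumes "T \<subseteq> {..<p}" "\<And>j. j < p \<Longrightarrow> j \<notin> T \<Longrightarrow> x j = 0" "0 \<le> \<rho>"
    and bound: "\<And>A B. A \<subseteq> T \<Longrightarrow> B \<subseteq> T \<Longrightarrow>
      \<bar>\<Sum>a\<in>A. \<Sum>b\<in>B. real_of_int (chi p (int a - int b))\<bar> \<le> \<rho> * sqrt (real (card A)) * sqrt (real (card B))"
  shows "\<bar>chi_form p x\<bar> \<le> 2 * \<rho> * harm (card T) * (\<Sum>j\<in>T. (x j)\<^sup>2)"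
proof -
  have fin: "finite T" using assms(1) finite_subset by blast
  have "chi_form p x = (\<Sum>a\<in>T. \<Sum>b<p. x a * x b * real_of_int (chi p (int a - int b)))"
    unfolding chi_form_def using assms(1,2) by (intro sum.mono_neutral_right) auto
  also have "\<dots> = (\<Sum>a\<in>T. \<Sum>b\<in>T. x a * x b * real_of_int (chi p (int a - int b)))"
    using assms(1,2) by (intro sum.cong refl sum.mono_neutral_right) auto
  finally show ?thesis
    using abs_quadratic_sum_le_harm[OF fin bound assms(3)] by simp
qed

lemma abs_sum_le_sqrt_card:
  fixes x :: "'a \<Rightarrow> real"
  shows "\<bar>\<Sum>i\<in>T. x i\<bar> \<le> sqrt (real (card T)) * sqrt (\<Sum>i\<in>T. (x i)\<^sup>2)"
proof -
  have "(\<Sum>i\<in>T. x i * 1)\<^sup>2 \<le> (\<Sum>i\<in>T. (x i)\<^sup>2) * (\<Sum>i\<in>T. 1\<^sup>2)"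
    by (rule Cauchy_Schwarz_ineq_sum)
  then have "\<bar>\<Sum>i\<in>T. x i\<bar> \<le> sqrt (real (card T) * (\<Sum>i\<in>T. (x i)\<^sup>2))"
    by (simp add: mult.commute real_le_rsqrt)
  then show ?thesis by (simp add: real_sqrt_mult)
qed

lemma two_mult_abs_sum_le:
  fixes a :: real and x :: "'a \<Rightarrow> real"
  shows "2 * \<bar>a\<bar> * \<bar>\<Sum>i\<in>T. x i\<bar> \<le> sqrt (real (card T)) * (a\<^sup>2 + (\<Sum>i\<in>T. (x i)\<^sup>2))"
proof -
  let ?s = "sqrt (\<Sum>i\<in>T. (x i)\<^sup>2)"
  have "2 * \<bar>a\<bar> * ?s \<le> a\<^sup>2 + ?s\<^sup>2"
    using sum_squares_bound[of "\<bar>a\<bar>" ?s] by (simp add: power2_eq_square)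
  then have "2 * \<bar>a\<bar> * ?s \<le> a\<^sup>2 + (\<Sum>i\<in>T. (x i)\<^sup>2)"
    by (simp add: sum_nonneg)
  then have "2 * \<bar>a\<bar> * (sqrt (real (card T)) * ?s) \<le> sqrt (real (card T)) * (a\<^sup>2 + (\<Sum>i\<in>T. (x i)\<^sup>2))"
    by (metis mult.left_commute mult_left_mono real_sqrt_ge_zero of_nat_0_le_iff)
  moreover have "2 * \<bar>a\<bar> * \<bar>\<Sum>i\<in>T. x i\<bar> \<le> 2 * \<bar>a\<bar> * (sqrt (real (card T)) * ?s)"
    by (intro mult_left_mono abs_sum_le_sqrt_card) auto
  ultimately show ?thesis by linarith
qed

lemma paley_RIP_of_bilinear_bound:
  assumes "prime p" "2 < p" "0 \<le> \<rho>"
    and bound: "\<And>A B. A \<subseteq> {0..<p} \<Longrightarrow> B \<subseteq> {0..<p} \<Longrightarrow> real (card A) \<le> K \<Longrightarrow> real (card B) \<le> K \<Longrightarrow>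
       \<bar>\<Sum>a\<in>A. \<Sum>b\<in>B. real_of_int (chi p (int a - int b))\<bar> \<le> \<rho> * sqrt (real (card A)) * sqrt (real (card B))"
    and \<delta>: "(2 * \<rho> * harm p + sqrt K) / sqrt (real p) \<le> \<delta>"
  shows "RIP (paley_matrix p) ((p + 1) div 2) (p + 1) K \<delta>"
  unfolding RIP_def
proof (intro allI impI)
  fix x :: "nat \<Rightarrow> real"
  assume supp: "real (card {j \<in> {0..<p + 1}. x j \<noteq> 0}) \<le> K"
  define T where "T = {j \<in> {0..<p}. x j \<noteq> 0}"
  define nx where "nx = (\<Sum>j<p + 1. (x j)\<^sup>2)"
  have T: "T \<subseteq> {..<p}" "finite T" unfolding T_def by auto
  have "card T \<le> card {j \<in> {0..<p + 1}. x j \<noteq> 0}" unfolding T_def by (intro card_mono) auto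
  then have card_T: "real (card T) \<le> K" using supp by linarith
  have "card T \<le> p" using card_mono[OF _ T(1)] by simp
  then have harm_T: "harm (card T) \<le> (harm p :: real)" by (rule harm_mono)
  have sq_T: "(\<Sum>j\<in>T. (x j)\<^sup>2) = (\<Sum>j<p. (x j)\<^sup>2)" "(\<Sum>j\<in>T. x j) = (\<Sum>j<p. x j)"
    unfolding T_def by (auto intro!: sum.mono_neutral_left)
  have nx: "nx = (\<Sum>j\<in>T. (x j)\<^sup>2) + (x p)\<^sup>2" "0 \<le> nx"
    unfolding nx_def sq_T by (simp_all add: sum_nonneg)
  have "\<bar>chi_form p x\<bar> \<le> 2 * \<rho> * harm (card T) * (\<Sum>j\<in>T. (x j)\<^sup>2)"
  proof (rule abs_chi_form_le[OF T(1) _ assms(3)])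
    fix A B assume "A \<subseteq> T" "B \<subseteq> T"
    moreover from this have "card A \<le> card T" "card B \<le> card T" using T(2) by (auto intro: card_mono)
    ultimately show "\<bar>\<Sum>a\<in>A. \<Sum>b\<in>B. real_of_int (chi p (int a - int b))\<bar>
        \<le> \<rho> * sqrt (real (card A)) * sqrt (real (card B))"
      using card_T T(1) by (intro bound) auto
  qed (auto simp: T_def)
  also have "\<dots> \<le> 2 * \<rho> * harm p * nx"
    using harm_T nx assms(3) harm_nonneg[where 'a = real]
    by (intro mult_mono mult_left_mono) (auto intro: sum_nonneg)
  finally have form: "\<bar>chi_form p x\<bar> / sqrt (real p) \<le> 2 * \<rho> * harm p * nx / sqrt (real p)"
    by (simp add: divide_right_mono)
  have "2 * \<bar>x p\<bar> * \<bar>\<Sum>j\<in>T. x j\<bar> \<le> sqrt K * nx"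
    using two_mult_abs_sum_le[of "x p" "\<lambda>j. x j" T] card_T nx
    by (smt (verit) mult_right_mono real_sqrt_le_mono add.commute)
  then have cross: "\<bar>2 * sqrt (1 / real p) * x p * (\<Sum>j<p. x j)\<bar> \<le> sqrt K * nx / sqrt (real p)"
    using assms(2) by (simp add: sq_T(2)[symmetric] abs_mult real_sqrt_divide divide_right_mono)
  have "\<bar>(\<Sum>i<(p + 1) div 2. (cmod (\<Sum>j<p + 1. paley_matrix p i j * of_real (x j)))\<^sup>2) - nx\<bar>
      \<le> (2 * \<rho> * harm p + sqrt K) / sqrt (real p) * nx"
    using paley_norm_squared_deviation[OF assms(1,2), of x] form cross
    unfolding nx_def[symmetric] by (simp add: add_divide_distrib algebra_simps)
  also have "\<dots> \<le> \<delta> * nx" using \<delta> nx(2) by (rule mult_right_mono)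
  finally show "(1 - \<delta>) * (\<Sum>j<p + 1. (x j)\<^sup>2)
      \<le> (\<Sum>i<(p + 1) div 2. (cmod (\<Sum>j<p + 1. paley_matrix p i j * complex_of_real (x j)))\<^sup>2) \<and>
      (\<Sum>i<(p + 1) div 2. (cmod (\<Sum>j<p + 1. paley_matrix p i j * complex_of_real (x j)))\<^sup>2)
      \<le> (1 + \<delta>) * (\<Sum>j<p + 1. (x j)\<^sup>2)"
    unfolding nx_def by (simp add: algebra_simps abs_le_iff)
qed

section \<open>From the discrepancy of single sets to pairs of sets\<close>

definition chi_sum :: "nat \<Rightarrow> nat set \<Rightarrow> nat set \<Rightarrow> real" where
  "chi_sum p A B = (\<Sum>a\<in>A. \<Sum>b\<in>B. real_of_int (chi p (int a - int b)))"

lemma chi_sum_commute: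
  assumes "prime p" "p mod 4 = 1"
  shows "chi_sum p A B = chi_sum p B A"
  unfolding chi_sum_def
  by (subst sum.swap) (metis (no_types, lifting) chi_uminus[OF assms] minus_diff_eq sum.cong)

lemma abs_chi_sum_le_card: "\<bar>chi_sum p A B\<bar> \<le> real (card A) * real (card B)"
proof -
  have "\<bar>chi_sum p A B\<bar> \<le> (\<Sum>a\<in>A. \<Sum>b\<in>B. \<bar>real_of_int (chi p (int a - int b))\<bar>)"
    unfolding chi_sum_def by (rule order_trans[OF sum_abs sum_mono[OF sum_abs]])
  also have "\<dots> \<le> (\<Sum>a\<in>A. \<Sum>b\<in>B. 1)"
    using abs_chi_le_1 by (intro sum_mono) (metis of_int_abs of_int_le_1_iff)
  finally show ?thesis by simp
qed

lemma chi_sum_Un_left: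
  "finite X \<Longrightarrow> finite Y \<Longrightarrow> X \<inter> Y = {} \<Longrightarrow> chi_sum p (X \<union> Y) B = chi_sum p X B + chi_sum p Y B"
  unfolding chi_sum_def by (rule sum.union_disjoint)

lemma chi_sum_Un_right:
  "finite X \<Longrightarrow> finite Y \<Longrightarrow> X \<inter> Y = {} \<Longrightarrow> chi_sum p A (X \<union> Y) = chi_sum p A X + chi_sum p A Y"
  unfolding chi_sum_def by (simp add: sum.union_disjoint sum.distrib)

lemma chi_sum_decompose:
  assumes "finite A" "finite B"
  shows "chi_sum p A B = chi_sum p (A \<inter> B) (A \<inter> B) + chi_sum p (A \<inter> B) (B - A) + chi_sum p (A - B) B"
proof -
  have "chi_sum p ((A \<inter> B) \<union> (A - B)) B = chi_sum p (A \<inter> B) B + chi_sum p (A - B) B"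
    using assms by (intro chi_sum_Un_left) auto
  moreover have "chi_sum p (A \<inter> B) ((A \<inter> B) \<union> (B - A))
      = chi_sum p (A \<inter> B) (A \<inter> B) + chi_sum p (A \<inter> B) (B - A)"
    using assms by (intro chi_sum_Un_right) auto
  moreover have "(A \<inter> B) \<union> (A - B) = A" "(A \<inter> B) \<union> (B - A) = B" by auto
  ultimately show ?thesis by simp
qed

text \<open>Sets of size at most \<open>s0\<close> are handled by the trivial bound, larger ones by the
  discrepancy hypothesis; for a disjoint pair of large sets, \<open>chi_sum\<close> is recovered by
  polarisation from the three diagonal sums of \<open>X\<close>, \<open>Y\<close> and \<open>X \<union> Y\<close>.\<close>

context
  fixes p :: nat and s0 K \<beta> :: real
  assumes prime: "prime p" "p mod 4 = 1"
    and \<beta>: "0 < \<beta>" "\<beta> \<le> 1" and s0: "0 < s0" and K: "0 \<le> K"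
    and discrepancy: "\<And>X. X \<subseteq> {0..<p} \<Longrightarrow> s0 < real (card X) \<Longrightarrow>
      \<bar>chi_sum p X X\<bar> < real (card X) powr (2 - \<beta>)"
begin

lemma abs_chi_sum_diag_le:
  assumes "X \<subseteq> {0..<p}" "real (card X) \<le> K"
  shows "\<bar>chi_sum p X X\<bar> \<le> (s0 + K powr (1 - \<beta>)) * real (card X)"
proof (cases "real (card X) \<le> s0")
  case True
  then have "\<bar>chi_sum p X X\<bar> \<le> s0 * real (card X)"
    using abs_chi_sum_le_card[of p X X] by (meson mult_right_mono of_nat_0_le_iff order_trans)
  then show ?thesis by (simp add: distrib_right add_increasing2)
next
  case False
  moreover have "real (card X) powr (2 - \<beta>) = real (card X) * real (card X) powr (1 - \<beta>)"
    using powr_add[of "real (card X)" 1 "1 - \<beta>"] by simp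
  ultimately have "\<bar>chi_sum p X X\<bar> < real (card X) * real (card X) powr (1 - \<beta>)"
    using discrepancy[OF assms(1)] by simp
  also have "\<dots> \<le> real (card X) * K powr (1 - \<beta>)"
    using False s0 assms(2) \<beta> by (simp add: powr_mono2)
  finally show ?thesis using s0 by (simp add: algebra_simps add_increasing)
qed

lemma abs_chi_sum_disjoint_small_le:
  assumes "real (card X) \<le> K" "real (card Y) \<le> K" "real (card X) \<le> s0 \<or> real (card Y) \<le> s0"
  shows "\<bar>chi_sum p X Y\<bar> \<le> sqrt (s0 * K) * sqrt (real (card X)) * sqrt (real (card Y))"
proof -
  let ?n = "real (card X) * real (card Y)"
  have "?n \<le> s0 * K"
    using assms s0 K mult_mono[of "real (card X)" s0 "real (card Y)" K]
      mult_mono[of "real (card X)" K "real (card Y)" s0] by (auto simp: mult.commute)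
  have "\<bar>chi_sum p X Y\<bar> \<le> sqrt ?n * sqrt ?n"
    using abs_chi_sum_le_card[of p X Y] by simp
  also have "\<dots> \<le> sqrt (s0 * K) * sqrt ?n"
    using \<open>?n \<le> s0 * K\<close> by (intro mult_right_mono real_sqrt_le_mono) auto
  finally show ?thesis by (simp add: real_sqrt_mult mult.assoc)
qed

lemma abs_chi_sum_disjoint_large_le:
  assumes X: "X \<subseteq> {0..<p}" "s0 < real (card X)" "real (card X) \<le> K"
    and Y: "Y \<subseteq> {0..<p}" "s0 < real (card Y)" "real (card Y) \<le> K"
    and "X \<inter> Y = {}"
  shows "\<bar>chi_sum p X Y\<bar> \<le> 6 * K powr (2 - \<beta>) / s0 * sqrt (real (card X)) * sqrt (real (card Y))"
proof -
  have fin: "finite X" "finite Y" using X(1) Y(1) finite_subset by auto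
  have "chi_sum p (X \<union> Y) (X \<union> Y) = chi_sum p X X + chi_sum p X Y + chi_sum p Y X + chi_sum p Y Y"
    using chi_sum_Un_left[OF fin assms(7)] chi_sum_Un_right[OF fin assms(7)] by simp
  then have polar: "2 * chi_sum p X Y = chi_sum p (X \<union> Y) (X \<union> Y) - chi_sum p X X - chi_sum p Y Y"
    using chi_sum_commute[OF prime, of Y X] by simp
  have diag: "\<bar>chi_sum p Z Z\<bar> \<le> 4 * K powr (2 - \<beta>)"
    if "Z \<subseteq> {0..<p}" "s0 < real (card Z)" "real (card Z) \<le> 2 * K" for Z
  proof -
    have "\<bar>chi_sum p Z Z\<bar> < real (card Z) powr (2 - \<beta>)" using discrepancy that by simp
    also have "\<dots> \<le> 2 powr (2 - \<beta>) * K powr (2 - \<beta>)"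
      using that \<beta> s0 K by (simp add: powr_mono2 flip: powr_mult)
    also have "\<dots> \<le> 2 powr 2 * K powr (2 - \<beta>)" using \<beta> by (intro mult_right_mono powr_mono) auto
    finally show ?thesis by simp
  qed
  have "card (X \<union> Y) = card X + card Y" using card_Un_disjoint[OF fin assms(7)] .
  then have "\<bar>chi_sum p (X \<union> Y) (X \<union> Y)\<bar> \<le> 4 * K powr (2 - \<beta>)"
    using X Y by (intro diag) auto
  moreover have "\<bar>chi_sum p X X\<bar> \<le> 4 * K powr (2 - \<beta>)" "\<bar>chi_sum p Y Y\<bar> \<le> 4 * K powr (2 - \<beta>)"
    using X Y K by (intro diag; simp)+
  ultimately have "\<bar>chi_sum p X Y\<bar> \<le> 6 * K powr (2 - \<beta>)"
    using polar by (simp add: abs_le_iff)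
  also have "\<dots> = 6 * K powr (2 - \<beta>) / s0 * s0" using s0 by simp
  also have "\<dots> \<le> 6 * K powr (2 - \<beta>) / s0 * (sqrt (real (card X)) * sqrt (real (card Y)))"
  proof (rule mult_left_mono)
    have "sqrt (s0 * s0) \<le> sqrt (real (card X) * real (card Y))"
      using X(2) Y(2) s0 by (intro real_sqrt_le_mono mult_mono) auto
    then show "s0 \<le> sqrt (real (card X)) * sqrt (real (card Y))"
      using s0 by (simp add: real_sqrt_mult)
  qed (use s0 in simp)
  finally show ?thesis by (simp only: mult.assoc)
qed

lemma abs_chi_sum_le:
  assumes A: "A \<subseteq> {0..<p}" "real (card A) \<le> K" and B: "B \<subseteq> {0..<p}" "real (card B) \<le> K"
  defines "\<rho> \<equiv> s0 + sqrt (s0 * K) + K powr (1 - \<beta>) + 6 * K powr (2 - \<beta>) / s0"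
  shows "\<bar>chi_sum p A B\<bar> \<le> 3 * \<rho> * sqrt (real (card A)) * sqrt (real (card B))"
proof -
  have fin: "finite A" "finite B" using A(1) B(1) finite_subset by auto
  have card: "real (card C) \<le> K" "sqrt (real (card C)) \<le> sqrt (real (card A))"
    if "C \<subseteq> A" for C
    using card_mono[OF fin(1) that] A(2) by auto
  have card': "real (card C) \<le> K" "sqrt (real (card C)) \<le> sqrt (real (card B))"
    if "C \<subseteq> B" for C
    using card_mono[OF fin(2) that] B(2) by auto
  have \<rho>: "s0 + K powr (1 - \<beta>) \<le> \<rho>" "sqrt (s0 * K) + 6 * K powr (2 - \<beta>) / s0 \<le> \<rho>"
    unfolding \<rho>_def using s0 K by auto
  have "0 \<le> \<rho>" using \<rho>(1) s0 powr_ge_zero[of K "1 - \<beta>"] by linarith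
  have disjoint: "\<bar>chi_sum p X Y\<bar> \<le> \<rho> * sqrt (real (card X)) * sqrt (real (card Y))"
    if "X \<subseteq> {0..<p}" "real (card X) \<le> K" "Y \<subseteq> {0..<p}" "real (card Y) \<le> K" "X \<inter> Y = {}" for X Y
  proof -
    have "\<bar>chi_sum p X Y\<bar>
        \<le> (sqrt (s0 * K) + 6 * K powr (2 - \<beta>) / s0) * sqrt (real (card X)) * sqrt (real (card Y))"
      using abs_chi_sum_disjoint_small_le[of X Y] abs_chi_sum_disjoint_large_le[of X Y] that s0 K
      by (cases "real (card X) \<le> s0 \<or> real (card Y) \<le> s0")
        (auto simp: distrib_right intro: order_trans add_increasing add_increasing2)
    also have "\<dots> \<le> \<rho> * sqrt (real (card X)) * sqrt (real (card Y))"
      using \<rho>(2) by (intro mult_right_mono) auto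
    finally show ?thesis .
  qed
  have "\<bar>chi_sum p A B\<bar>
      \<le> \<bar>chi_sum p (A \<inter> B) (A \<inter> B)\<bar> + \<bar>chi_sum p (A \<inter> B) (B - A)\<bar> + \<bar>chi_sum p (A - B) B\<bar>"
    unfolding chi_sum_decompose[OF fin] by linarith
  also have "\<dots> \<le> \<rho> * (sqrt (real (card (A \<inter> B))) * sqrt (real (card (A \<inter> B))))
      + \<rho> * sqrt (real (card (A \<inter> B))) * sqrt (real (card (B - A)))
      + \<rho> * sqrt (real (card (A - B))) * sqrt (real (card B))"
  proof (intro add_mono)
    have "\<bar>chi_sum p (A \<inter> B) (A \<inter> B)\<bar> \<le> (s0 + K powr (1 - \<beta>)) * real (card (A \<inter> B))"
      using card[of "A \<inter> B"] A(1) by (intro abs_chi_sum_diag_le) auto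
    also have "\<dots> \<le> \<rho> * real (card (A \<inter> B))"
      using \<rho>(1) by (rule mult_right_mono) simp
    finally show "\<bar>chi_sum p (A \<inter> B) (A \<inter> B)\<bar>
        \<le> \<rho> * (sqrt (real (card (A \<inter> B))) * sqrt (real (card (A \<inter> B))))"
      by simp
    show "\<bar>chi_sum p (A \<inter> B) (B - A)\<bar> \<le> \<rho> * sqrt (real (card (A \<inter> B))) * sqrt (real (card (B - A)))"
      using A B card[of "A \<inter> B"] card'[of "B - A"] by (intro disjoint) auto
    show "\<bar>chi_sum p (A - B) B\<bar> \<le> \<rho> * sqrt (real (card (A - B))) * sqrt (real (card B))"
      using A B card[of "A - B"] by (intro disjoint) auto
  qed
  also have "\<dots> \<le> \<rho> * (sqrt (real (card A)) * sqrt (real (card B)))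
      + \<rho> * sqrt (real (card A)) * sqrt (real (card B))
      + \<rho> * sqrt (real (card A)) * sqrt (real (card B))"
    using card card' \<open>0 \<le> \<rho>\<close> by (intro add_mono mult_left_mono mult_mono) auto
  finally show ?thesis by (simp add: algebra_simps)
qed

end

lemma ex_threshold_iff_eventually:
  "(\<exists>P. \<forall>p::nat. prime p \<and> p mod 4 = 1 \<and> p \<ge> P \<longrightarrow> Q p)
    \<longleftrightarrow> eventually (\<lambda>p. prime p \<and> p mod 4 = 1 \<longrightarrow> Q p) sequentially"
  by (auto simp: eventually_sequentially)

lemma eventually_sequentially_of_at_top:
  "eventually P at_top \<Longrightarrow> eventually (\<lambda>n. P (real n)) sequentially"
  using filterlim_real_sequentially unfolding filterlim_iff by blast

lemma eventually_powr_add_le_powr: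
  fixes a c C :: real
  assumes "a < c" "0 < c"
  shows "eventually (\<lambda>x. x powr a + C \<le> x powr c) at_top"
proof -
  have "eventually (\<lambda>x. x powr a \<le> x powr c / 2) at_top" using assms(1) by real_asymp
  moreover have "eventually (\<lambda>x. C \<le> x powr c / 2) at_top" using assms(2) by real_asymp
  ultimately show ?thesis by eventually_elim simp
qed

lemma powr_shift_half_mult_sqrt: "0 \<le> (x :: real) \<Longrightarrow> x powr (a - 1/2 + b) * sqrt x = x powr (a + b)"
  by (simp add: powr_half_sqrt[symmetric] flip: powr_add)

section \<open>Discrepancy implies the restricted isometry property\<close>

text \<open>With \<open>s0 = p\<^sup>\<alpha>\<close> and \<open>K = p\<^sup>\<gamma>\<close>, the exponents of the four terms of the constant in
  \<open>abs_chi_sum_le\<close> and of \<open>sqrt K\<close> must all stay below \<open>1/2\<close> while \<open>\<gamma> > 1/2\<close>; one takes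
  \<open>\<gamma> = 1/2 + \<eta>\<close> for small \<open>\<eta>\<close> and \<open>\<alpha>'\<close> just below \<open>1 - \<gamma>\<close>.\<close>

lemma discrepancy_exponents:
  fixes \<alpha> b :: real
  assumes "0 < \<alpha>" "\<alpha> < 1/2" "0 < b" "b \<le> 1"
  obtains \<gamma> \<alpha>' where "1/2 < \<gamma>" "\<alpha> \<le> \<alpha>'" "\<alpha>' < 1/2" "(\<alpha>' + \<gamma>) / 2 < 1/2"
    "\<gamma> * (1 - b) < 1/2" "\<gamma> * (2 - b) - \<alpha>' < 1/2" "\<gamma> / 2 < 1/2"
proof -
  define \<eta> where "\<eta> = min (1/2 - \<alpha>) (b / 6) / 2"
  define \<gamma> where "\<gamma> = 1/2 + \<eta>"
  define M where "M = max \<alpha> (\<gamma> * (2 - b) - 1/2)"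
  define \<alpha>' where "\<alpha>' = (M + (1 - \<gamma>)) / 2"
  have \<eta>: "0 < \<eta>" "\<eta> < 1/2 - \<alpha>" "\<eta> \<le> b / 12" "0 \<le> \<eta> * b"
    unfolding \<eta>_def using assms by (auto simp: min_def)
  have \<gamma>: "\<gamma> * (1 - b) = 1/2 - b/2 + \<eta> - \<eta> * b" "\<gamma> * (2 - b) = 1 - b/2 + 2 * \<eta> - \<eta> * b"
    unfolding \<gamma>_def by (simp_all add: algebra_simps add_divide_distrib diff_divide_distrib)
  have "\<alpha> < 1 - \<gamma>" using \<eta> \<gamma>_def by linarith
  moreover have "\<gamma> * (2 - b) - 1/2 < 1 - \<gamma>" using \<eta> \<gamma> \<gamma>_def by linarith
  ultimately have "\<alpha> \<le> M" "\<gamma> * (2 - b) - 1/2 \<le> M" "M < 1 - \<gamma>"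
    unfolding M_def by auto
  then have \<alpha>': "\<alpha> \<le> \<alpha>'" "\<alpha>' < 1 - \<gamma>" "\<gamma> * (2 - b) - \<alpha>' < 1/2"
    using \<alpha>'_def by auto
  have "1/2 < \<gamma>" "\<gamma> < 1" using \<eta> \<gamma>_def assms by auto
  moreover have "\<gamma> * (1 - b) < 1/2" using \<eta> \<gamma> by linarith
  ultimately show ?thesis
    using \<alpha>' by (intro that[of \<gamma> \<alpha>']) auto
qed

lemma discrepancy_constant_le:
  fixes x a g b t h :: real
  assumes "1 \<le> x" "a \<le> t" "(a + g) / 2 \<le> t" "g * (1 - b) \<le> t" "g * (2 - b) - a \<le> t" "g / 2 \<le> t"
    and "0 \<le> h" "h \<le> 1 + ln x"
  defines "K \<equiv> x powr g" and "s0 \<equiv> x powr a"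
  shows "2 * (3 * (s0 + sqrt (s0 * K) + K powr (1 - b) + 6 * K powr (2 - b) / s0)) * h + sqrt K
    \<le> 55 * x powr t * (1 + ln x)"
proof -
  let ?R = "s0 + sqrt (s0 * K) + K powr (1 - b) + 6 * K powr (2 - b) / s0"
  have le: "x powr e \<le> x powr t" if "e \<le> t" for e using that assms(1) by (rule powr_mono)
  have "sqrt (s0 * K) = x powr ((a + g) / 2)" "sqrt K = x powr (g / 2)"
    unfolding K_def s0_def using assms(1) by (simp_all add: powr_half_sqrt_powr flip: powr_add)
  moreover have "K powr (1 - b) = x powr (g * (1 - b))"
    unfolding K_def by (simp add: powr_powr)
  moreover have "K powr (2 - b) / s0 = x powr (g * (2 - b) - a)"
    unfolding K_def s0_def by (simp only: powr_powr powr_diff[of x "g * (2 - b)" a])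
  ultimately have R: "?R \<le> 9 * x powr t" and sqrt_K: "sqrt K \<le> x powr t * (1 + ln x)"
    using le[OF assms(2)] le[OF assms(3)] le[OF assms(4)] le[OF assms(5)] le[OF assms(6)] assms(1)
    unfolding s0_def by (auto simp: mult_le_cancel_left1 intro: order_trans)
  have "0 \<le> ?R" unfolding s0_def K_def by simp
  then have "?R * h \<le> 9 * x powr t * (1 + ln x)"
    using R assms(7,8) by (intro mult_mono) auto
  then show ?thesis using sqrt_K by linarith
qed

definition paley_discrepancy_at :: "nat \<Rightarrow> real \<Rightarrow> real \<Rightarrow> bool" where
  "paley_discrepancy_at p \<alpha> \<beta> \<longleftrightarrow> (\<forall>S. S \<subseteq> {0..<int p} \<and> real (card S) > real p powr \<alpha> \<longrightarrow>
     \<bar>real_of_int (\<Sum>a\<in>S. \<Sum>b\<in>S. chi p (a - b))\<bar> < real (card S) powr (2 - \<beta>))"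

lemma PaleyDiscrepancy_eventually:
  "PaleyDiscrepancy \<alpha> \<beta> \<longleftrightarrow> eventually (\<lambda>p. prime p \<and> p mod 4 = 1 \<longrightarrow> paley_discrepancy_at p \<alpha> \<beta>) sequentially"
  unfolding PaleyDiscrepancy_def paley_discrepancy_at_def ex_threshold_iff_eventually ..

lemma paley_discrepancy_at_mono:
  assumes "paley_discrepancy_at p \<alpha> \<beta>" "\<alpha> \<le> \<alpha>'" "b \<le> \<beta>" "1 \<le> real p"
  shows "paley_discrepancy_at p \<alpha>' b"
  unfolding paley_discrepancy_at_def
proof (intro allI impI)
  fix S assume S: "S \<subseteq> {0..<int p} \<and> real p powr \<alpha>' < real (card S)"
  then have "real p powr \<alpha> < real (card S)"
    using powr_mono[OF assms(2,4)] by linarith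
  moreover from this have "0 < real (card S)" using powr_ge_zero[of "real p" \<alpha>] by linarith
  then have "1 \<le> real (card S)" by (cases "card S") auto
  ultimately have "\<bar>real_of_int (\<Sum>a\<in>S. \<Sum>b\<in>S. chi p (a - b))\<bar> < real (card S) powr (2 - \<beta>)"
    using assms(1) S unfolding paley_discrepancy_at_def by blast
  also have "\<dots> \<le> real (card S) powr (2 - b)"
    using \<open>1 \<le> real (card S)\<close> assms(3) by (intro powr_mono) auto
  finally show "\<bar>real_of_int (\<Sum>a\<in>S. \<Sum>b\<in>S. chi p (a - b))\<bar> < real (card S) powr (2 - b)" .
qed

lemma chi_sum_eq_sum_int_image:
  "chi_sum p A A = real_of_int (\<Sum>a\<in>int ` A. \<Sum>b\<in>int ` A. chi p (a - b))"
  unfolding chi_sum_def by (simp add: sum.reindex)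

lemma paley_RIP_of_discrepancy_at:
  fixes p :: nat and \<alpha> b \<gamma> t :: real
  assumes "prime p" "p mod 4 = 1" "0 < b" "b \<le> 1"
    and disc: "paley_discrepancy_at p \<alpha> b"
    and t: "\<alpha> \<le> t" "(\<alpha> + \<gamma>) / 2 \<le> t" "\<gamma> * (1 - b) \<le> t" "\<gamma> * (2 - b) - \<alpha> \<le> t" "\<gamma> / 2 \<le> t"
  shows "RIP (paley_matrix p) ((p + 1) div 2) (p + 1) (real p powr \<gamma>)
    (55 * real p powr t * (1 + ln (real p)) / sqrt (real p))"
proof -
  define s0 where "s0 = real p powr \<alpha>"
  define K where "K = real p powr \<gamma>"
  define \<rho> where "\<rho> = s0 + sqrt (s0 * K) + K powr (1 - b) + 6 * K powr (2 - b) / s0"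
  have p: "2 < p" "1 \<le> real p" using prime_mod_4_eq_1_gt_2[OF assms(1,2)] by auto
  have "0 < s0" "0 \<le> K" unfolding s0_def K_def using p by auto
  then have "0 \<le> \<rho>" unfolding \<rho>_def by simp
  have "\<bar>chi_sum p X X\<bar> < real (card X) powr (2 - b)"
    if "X \<subseteq> {0..<p}" "s0 < real (card X)" for X
  proof -
    have "int ` X \<subseteq> {0..<int p}" "card (int ` X) = card X" using that(1) by (auto simp: card_image)
    then show ?thesis
      using disc[unfolded paley_discrepancy_at_def, rule_format, of "int ` X"] that(2)
      unfolding chi_sum_eq_sum_int_image s0_def by simp
  qed
  then have bilinear: "\<bar>chi_sum p A B\<bar> \<le> 3 * \<rho> * sqrt (real (card A)) * sqrt (real (card B))"
    if "A \<subseteq> {0..<p}" "real (card A) \<le> K" "B \<subseteq> {0..<p}" "real (card B) \<le> K" for A B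
    using abs_chi_sum_le[OF assms(1,2,3,4) \<open>0 < s0\<close> \<open>0 \<le> K\<close>] that unfolding \<rho>_def by blast
  have "harm p \<le> 1 + ln (real p)"
    using euler_mascheroni_sequence_decreasing[of 1 p] p by (simp add: harm_def)
  then have "2 * (3 * \<rho>) * harm p + sqrt K \<le> 55 * real p powr t * (1 + ln (real p))"
    unfolding \<rho>_def s0_def K_def using p(2) t harm_nonneg by (intro discrepancy_constant_le) auto
  then have \<delta>: "(2 * (3 * \<rho>) * harm p + sqrt K) / sqrt (real p)
      \<le> 55 * real p powr t * (1 + ln (real p)) / sqrt (real p)"
    by (rule divide_right_mono) simp
  show ?thesis
    unfolding K_def[symmetric]
    using \<open>0 \<le> \<rho>\<close> bilinear
    by (intro paley_RIP_of_bilinear_bound[OF assms(1) p(1) _ _ \<delta>]) (auto simp: chi_sum_def)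
qed

theorem PaleyDiscrepancy_imp_PaleyRIP:
  assumes "0 < \<alpha>" "\<alpha> < 1/2" "0 < \<beta>" "PaleyDiscrepancy \<alpha> \<beta>"
  shows "\<exists>\<gamma> \<tau>. \<gamma> > 1/2 \<and> \<tau> < 1/2 \<and> (\<forall>\<epsilon>>0. PaleyRIP \<gamma> (\<tau> - 1/2 + \<epsilon>))"
proof -
  define b where "b = min \<beta> 1"
  have b: "0 < b" "b \<le> 1" and "b \<le> \<beta>" unfolding b_def using assms(3) by auto
  obtain \<gamma> \<alpha>' where exps: "1/2 < \<gamma>" "\<alpha> \<le> \<alpha>'" "\<alpha>' < 1/2" "(\<alpha>' + \<gamma>) / 2 < 1/2"
    "\<gamma> * (1 - b) < 1/2" "\<gamma> * (2 - b) - \<alpha>' < 1/2" "\<gamma> / 2 < 1/2"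
    using discrepancy_exponents[OF assms(1,2) b] .
  define t where "t = max \<alpha>' (max ((\<alpha>' + \<gamma>) / 2) (max (\<gamma> * (1 - b)) (max (\<gamma> * (2 - b) - \<alpha>') (\<gamma> / 2))))"
  have t_ge: "\<alpha>' \<le> t" "(\<alpha>' + \<gamma>) / 2 \<le> t" "\<gamma> * (1 - b) \<le> t" "\<gamma> * (2 - b) - \<alpha>' \<le> t" "\<gamma> / 2 \<le> t"
    unfolding t_def by (simp_all only: le_max_iff_disj order_refl simp_thms)
  have "t < 1/2" unfolding t_def using exps by (simp only: max_less_iff_conj simp_thms)
  define \<tau> where "\<tau> = (t + 1/2) / 2"
  have "\<tau> < 1/2" "t < \<tau>" using \<open>t < 1/2\<close> unfolding \<tau>_def by auto
  moreover have "PaleyRIP \<gamma> (\<tau> - 1/2 + \<epsilon>)" if "0 < \<epsilon>" for \<epsilon>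
  proof -
    have "eventually (\<lambda>p. prime p \<and> p mod 4 = 1 \<longrightarrow> paley_discrepancy_at p \<alpha> \<beta>) sequentially"
      using assms(4) unfolding PaleyDiscrepancy_eventually .
    moreover have "eventually (\<lambda>p. 55 * real p powr t * (1 + ln (real p)) / sqrt (real p)
        \<le> real p powr (\<tau> - 1/2 + \<epsilon>)) sequentially"
      using \<open>t < \<tau>\<close> \<open>0 < \<epsilon>\<close> by (intro eventually_sequentially_of_at_top) real_asymp
    ultimately have "eventually (\<lambda>p. prime p \<and> p mod 4 = 1 \<longrightarrow>
        RIP (paley_matrix p) ((p + 1) div 2) (p + 1) (real p powr \<gamma>) (real p powr (\<tau> - 1/2 + \<epsilon>))) sequentially"
    proof eventually_elim
      case (elim p)
      show ?case
      proof
        assume p: "prime p \<and> p mod 4 = 1"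
        then have "1 \<le> real p" using prime_ge_1_nat by simp
        moreover have "paley_discrepancy_at p \<alpha> \<beta>" using elim(1) p by blast
        ultimately have "paley_discrepancy_at p \<alpha>' b"
          using paley_discrepancy_at_mono[OF _ exps(2) \<open>b \<le> \<beta>\<close>] by blast
        with p have "RIP (paley_matrix p) ((p + 1) div 2) (p + 1) (real p powr \<gamma>)
            (55 * real p powr t * (1 + ln (real p)) / sqrt (real p))"
          by (intro paley_RIP_of_discrepancy_at[OF _ _ b _ t_ge]) auto
        then show "RIP (paley_matrix p) ((p + 1) div 2) (p + 1) (real p powr \<gamma>) (real p powr (\<tau> - 1/2 + \<epsilon>))"
          using elim(2) by (rule RIP_mono)
      qed
    qed
    then show ?thesis unfolding PaleyRIP_def ex_threshold_iff_eventually .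
  qed
  ultimately show ?thesis using exps(1) by blast
qed

section \<open>The restricted isometry property bounds cliques\<close>

lemma chi_form_clique_indicator:
  assumes "N \<subseteq> {0..<p}" "\<And>a b. a \<in> N \<Longrightarrow> b \<in> N \<Longrightarrow> a \<noteq> b \<Longrightarrow> chi p (int a - int b) = 1"
  shows "chi_form p (\<lambda>j. if j \<in> N then 1 else 0) = real (card N) * (real (card N) - 1)"
proof -
  have fin: "finite N" using assms(1) finite_subset by blast
  let ?x = "\<lambda>j. if j \<in> N then 1 else 0 :: real"
  have "chi_form p ?x = (\<Sum>j\<in>N. \<Sum>k<p. ?x j * ?x k * real_of_int (chi p (int j - int k)))"
    unfolding chi_form_def using assms(1) by (intro sum.mono_neutral_right) auto
  also have "\<dots> = (\<Sum>j\<in>N. \<Sum>k\<in>N. ?x j * ?x k * real_of_int (chi p (int j - int k)))"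
    using assms(1) by (intro sum.cong refl sum.mono_neutral_right) auto
  also have "\<dots> = (\<Sum>j\<in>N. \<Sum>k\<in>N. real_of_int (chi p (int j - int k)))"
    by simp
  also have "\<dots> = (\<Sum>j\<in>N. real (card N) - 1)"
  proof (intro sum.cong refl)
    fix j assume j: "j \<in> N"
    have "(\<Sum>k\<in>N. real_of_int (chi p (int j - int k))) = (\<Sum>k\<in>N - {j}. real_of_int (chi p (int j - int k)))"
      using j fin by (simp add: sum.remove)
    also have "\<dots> = (\<Sum>k\<in>N - {j}. 1)"
      using assms(2) j by (intro sum.cong refl) auto
    moreover have "card N \<noteq> 0" using j fin by auto
    ultimately show "(\<Sum>k\<in>N. real_of_int (chi p (int j - int k))) = real (card N) - 1"
      using j fin by (simp add: card_Diff_singleton of_nat_diff)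
  qed
  finally show ?thesis by simp
qed

lemma clique_card_le_of_RIP:
  assumes "prime p" "p mod 4 = 1" "0 \<le> \<delta>" "RIP (paley_matrix p) ((p + 1) div 2) (p + 1) K \<delta>"
    and N: "N \<subseteq> {0..<p}" "\<And>a b. a \<in> N \<Longrightarrow> b \<in> N \<Longrightarrow> a \<noteq> b \<Longrightarrow> chi p (int a - int b) = 1"
    "real (card N) \<le> K"
  shows "real (card N) - 1 \<le> \<delta> * sqrt (real p)"
proof (cases "N = {}")
  case False
  define x where "x j = (if j \<in> N then 1 else 0 :: real)" for j
  define m where "m = real (card N)"
  let ?S = "\<Sum>i<(p + 1) div 2. (cmod (\<Sum>j<p + 1. paley_matrix p i j * complex_of_real (x j)))\<^sup>2"
  have p: "2 < p" using prime_mod_4_eq_1_gt_2[OF assms(1,2)] .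
  have "0 < m" using False N(1) unfolding m_def by (simp add: card_gt_0_iff finite_subset)
  have "{j \<in> {0..<p + 1}. x j \<noteq> 0} = N" using N(1) unfolding x_def by auto
  moreover have "(\<Sum>j<p + 1. (x j)\<^sup>2) = (\<Sum>j\<in>N. 1)"
    using N(1) unfolding x_def by (intro sum.mono_neutral_cong_right) auto
  then have "(\<Sum>j<p + 1. (x j)\<^sup>2) = m" unfolding m_def by simp
  ultimately have "(1 - \<delta>) * m \<le> ?S" "?S \<le> (1 + \<delta>) * m"
    using assms(4) N(3) unfolding RIP_def m_def by auto
  moreover have "x p = 0" using N(1) by (auto simp: x_def)
  then have "\<bar>?S - m\<bar> = m * (m - 1) / sqrt (real p)"
    using paley_norm_squared_deviation[OF assms(1) p, of x] chi_form_clique_indicator[OF N(1,2)]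
      \<open>(\<Sum>j<p + 1. (x j)\<^sup>2) = m\<close> \<open>0 < m\<close>
    unfolding x_def m_def by (simp add: abs_mult)
  ultimately have "m * (m - 1) / sqrt (real p) \<le> m * \<delta>" by (simp add: algebra_simps)
  then have "m * (m - 1) \<le> m * (\<delta> * sqrt (real p))"
    using p by (simp add: divide_le_eq mult.assoc)
  then show ?thesis using \<open>0 < m\<close> unfolding m_def by simp
next
  case True
  have "0 \<le> \<delta> * sqrt (real p)" using assms(3) by simp
  then show ?thesis using True by simp
qed

lemma card_paley_clique_le:
  assumes "prime p" "p mod 4 = 1" "0 \<le> \<delta>" "RIP (paley_matrix p) ((p + 1) div 2) (p + 1) K \<delta>"
    and "paley_clique p S" "\<delta> * sqrt (real p) + 2 \<le> K"
  shows "real (card S) \<le> \<delta> * sqrt (real p) + 1"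
proof -
  have S: "S \<subseteq> {0..<int p}" "\<And>a b. a \<in> S \<Longrightarrow> b \<in> S \<Longrightarrow> a \<noteq> b \<Longrightarrow> chi p (a - b) = 1"
    using assms(5) unfolding paley_clique_def by auto
  then have "inj_on nat S" by (intro inj_onI) (auto simp: subset_eq eq_nat_nat_iff)
  then have card_S: "card (nat ` S) = card S" by (rule card_image)
  have bound: "real (card N) - 1 \<le> \<delta> * sqrt (real p)"
    if "N \<subseteq> nat ` S" "real (card N) \<le> K" for N
  proof (rule clique_card_le_of_RIP[OF assms(1-4) _ _ that(2)])
    show "N \<subseteq> {0..<p}" using that(1) S(1) by force
    show "chi p (int a - int b) = 1" if "a \<in> N" "b \<in> N" "a \<noteq> b" for a b
    proof -
      have "int a \<in> S" "int b \<in> S"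
        using that(1,2) \<open>N \<subseteq> nat ` S\<close> S(1) by (auto simp: subset_eq)
      then show ?thesis using S(2) that(3) by simp
    qed
  qed
  show ?thesis
  proof (cases "real (card S) \<le> K")
    case True
    then show ?thesis using bound[of "nat ` S"] card_S by simp
  next
    case False
    let ?m = "nat \<lfloor>K\<rfloor>"
    have "0 \<le> K" using assms(3,6) by (smt (verit) mult_nonneg_nonneg real_sqrt_ge_zero of_nat_0_le_iff)
    then have m_eq: "real ?m = of_int \<lfloor>K\<rfloor>" by simp
    have m: "K - 1 < real ?m" "real ?m \<le> K"
      unfolding m_eq by (simp_all add: of_int_floor_le)
    then have "?m \<le> card (nat ` S)" using False card_S by (simp only: of_nat_le_iff flip: of_nat_le_iff)
    then obtain N where "N \<subseteq> nat ` S" "card N = ?m"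
      by (rule obtain_subset_with_card_n)
    then have "K - 2 < \<delta> * sqrt (real p)"
      using bound[of N] m by linarith
    then show ?thesis using assms(6) by linarith
  qed
qed

theorem PaleyRIP_imp_PaleyClique:
  assumes "\<gamma> > 1/2" "\<tau> < 1/2" "\<forall>\<epsilon>>0. PaleyRIP \<gamma> (\<tau> - 1/2 + \<epsilon>)"
  shows "\<exists>\<tau>. \<tau> < 1/2 \<and> (\<forall>\<epsilon>>0. PaleyClique (\<tau> + \<epsilon>))"
proof -
  define \<tau>' where "\<tau>' = max \<tau> 0"
  have "\<tau>' < 1/2" unfolding \<tau>'_def using assms(2) by simp
  moreover have "PaleyClique (\<tau>' + \<epsilon>)" if "0 < \<epsilon>" for \<epsilon>
  proof -
    define \<epsilon>' where "\<epsilon>' = min \<epsilon> (\<gamma> - \<tau>') / 2"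
    have "\<tau> \<le> \<tau>'" "\<tau>' < \<gamma>" unfolding \<tau>'_def using assms(1,2) by auto
    moreover have "\<epsilon>' \<le> \<epsilon> / 2" "\<epsilon>' \<le> (\<gamma> - \<tau>') / 2" "0 < \<epsilon>'"
      unfolding \<epsilon>'_def using that \<open>\<tau>' < \<gamma>\<close> by auto
    ultimately have \<epsilon>': "0 < \<epsilon>'" "\<tau> + \<epsilon>' < \<tau>' + \<epsilon>" "\<tau> + \<epsilon>' < \<gamma>"
      using that by auto
    have "eventually (\<lambda>p. prime p \<and> p mod 4 = 1 \<longrightarrow>
        RIP (paley_matrix p) ((p + 1) div 2) (p + 1) (real p powr \<gamma>) (real p powr (\<tau> - 1/2 + \<epsilon>'))) sequentially"
      using assms(3) \<epsilon>'(1) unfolding PaleyRIP_def ex_threshold_iff_eventually by blast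
    moreover have "eventually (\<lambda>p. real p powr (\<tau> + \<epsilon>') + 1 \<le> real p powr (\<tau>' + \<epsilon>)) sequentially"
      using \<epsilon>'(2) that \<open>\<tau>' < 1/2\<close> unfolding \<tau>'_def
      by (intro eventually_sequentially_of_at_top eventually_powr_add_le_powr) auto
    moreover have "eventually (\<lambda>p. real p powr (\<tau> + \<epsilon>') + 2 \<le> real p powr \<gamma>) sequentially"
      using \<epsilon>'(3) assms(1) by (intro eventually_sequentially_of_at_top eventually_powr_add_le_powr) auto
    ultimately have "eventually (\<lambda>p. prime p \<and> p mod 4 = 1 \<longrightarrow>
        (\<forall>S. paley_clique p S \<longrightarrow> real (card S) \<le> real p powr (\<tau>' + \<epsilon>))) sequentially"
    proof eventually_elim
      case (elim p)
      show ?case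
      proof (intro impI allI)
        fix S assume p: "prime p \<and> p mod 4 = 1" and "paley_clique p S"
        have \<delta>: "real p powr (\<tau> - 1/2 + \<epsilon>') * sqrt (real p) = real p powr (\<tau> + \<epsilon>')"
          by (simp add: powr_shift_half_mult_sqrt)
        have "real (card S) \<le> real p powr (\<tau> - 1/2 + \<epsilon>') * sqrt (real p) + 1"
        proof (rule card_paley_clique_le)
          show "RIP (paley_matrix p) ((p + 1) div 2) (p + 1) (real p powr \<gamma>) (real p powr (\<tau> - 1/2 + \<epsilon>'))"
            using elim(1) p by blast
          show "real p powr (\<tau> - 1/2 + \<epsilon>') * sqrt (real p) + 2 \<le> real p powr \<gamma>"
            using elim(3) \<delta> by simp
        qed (use p \<open>paley_clique p S\<close> in auto)
        then show "real (card S) \<le> real p powr (\<tau>' + \<epsilon>)" using \<delta> elim(2) by simp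
      qed
    qed
    then show ?thesis unfolding PaleyClique_def ex_threshold_iff_eventually .
  qed
  ultimately show ?thesis by blast
qed

theorem mainTheorem1:
  shows "((\<exists>\<alpha> \<beta>. 0 < \<alpha> \<and> \<alpha> < 1/2 \<and> 0 < \<beta> \<and> \<beta> < 2 \<and> PaleyDiscrepancy \<alpha> \<beta>)
            \<longrightarrow> (\<exists>\<gamma> \<tau>. \<gamma> > 1/2 \<and> \<tau> < 1/2 \<and> (\<forall>\<epsilon>>0. PaleyRIP \<gamma> (\<tau> - 1/2 + \<epsilon>))))
       \<and> ((\<exists>\<gamma> \<tau>. \<gamma> > 1/2 \<and> \<tau> < 1/2 \<and> (\<forall>\<epsilon>>0. PaleyRIP \<gamma> (\<tau> - 1/2 + \<epsilon>)))
            \<longrightarrow> (\<exists>\<tau>. \<tau> < 1/2 \<and> (\<forall>\<epsilon>>0. PaleyClique (\<tau> + \<epsilon>))))"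
  using PaleyDiscrepancy_imp_PaleyRIP PaleyRIP_imp_PaleyClique by blast

end
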